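(* Let $n,k\ge1$ be integers, $D=\{(x,y)\in\mathbb{R}^n\times\mathbb{R}:\|x\|\le1,|y|\le1\}$, $D_0=\{(x,0)\in D\}$, $D^*=D\setminus D_0$, and let $T=(F,G):D^*\to D$ satisfy condition (L1) of the context. Then there exist a neighborhood $U$ of $D_0$ and a constant $c>0$ such that $\|D^kT(a,b)\|\le c\,|b|^{\alpha-k}$ for all $(a,b)\in U\cap D^*$.
   Context: $\|\cdot\|$ is a norm on $\mathbb{R}^n$, with the induced norms on multilinear maps. Condition (L1): in a neighborhood of $D_0$, $F(x,y)=x_\pm^*+|y|^\alpha[B_\pm^*+\varphi_\pm(x,y)]$ and $G(x,y)=y_\pm^*+|y|^\alpha[A_\pm^*+\psi_\pm(x,y)]$, with sign $+$ for $y>0$ and $-$ for $y<0$, where $x_\pm^*,B_\pm^*\in\mathbb{R}^n$, $y_\pm^*\in\mathbb{R}$, $A_\pm^*$ are nonzero real constants, $\alpha>0$, and $\varphi_\pm,\psi_\pm$ are of class $C^{k+1}$ with derivatives uniformly bounded with respect to $x$ and satisfying $\|\partial^{l+m}\varphi_\pm/\partial x^l\partial y^m(x,y)\|\le K|y|^{\gamma-m}$, $\|\partial^{l+m}\psi_\pm/\partial x^l\partial y^m(x,y)\|\le K|y|^{\gamma-m}$ for all $l,m\in\{0,\dots,k+1\}$ with $l+m\le k+1$, where $K>0$ and $\gamma>k-1$ are constants. *)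

theory Defs
  imports "HOL-Analysis.Analysis"
begin

definition is_norm :: "('a::real_vector \<Rightarrow> real) \<Rightarrow> bool" where
  "is_norm N \<longleftrightarrow> (\<forall>x. 0 \<le> N x) \<and> (\<forall>x. N x = 0 \<longrightarrow> x = 0)
     \<and> (\<forall>c x. N (c *\<^sub>R x) = \<bar>c\<bar> * N x) \<and> (\<forall>x y. N (x + y) \<le> N x + N y)"

definition prod_norm :: "('a \<Rightarrow> real) \<Rightarrow> 'a \<times> real \<Rightarrow> real" where
  "prod_norm N p = max (N (fst p)) \<bar>snd p\<bar>"

text \<open>Iterated Frechet derivative relative to a set S.
  hderiv S j f p [h1,...,hj] = D^j f(p)(h1,...,hj); the head direction is the
  outermost differentiation.\<close>
fun hderiv :: "'v::real_normed_vector set \<Rightarrow> nat \<Rightarrow> ('v \<Rightarrow> 'w::real_normed_vector)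
                 \<Rightarrow> 'v \<Rightarrow> 'v list \<Rightarrow> 'w" where
  "hderiv S 0 f p hs = f p"
| "hderiv S (Suc j) f p hs =
     frechet_derivative (\<lambda>q. hderiv S j f q (tl hs)) (at p within S) (hd hs)"

definition Ck_on :: "nat \<Rightarrow> ('v::real_normed_vector \<Rightarrow> 'w::real_normed_vector) \<Rightarrow> 'v set \<Rightarrow> bool" where
  "Ck_on m f S \<longleftrightarrow>
     (\<forall>j<m. \<forall>hs. length hs = j \<longrightarrow>
        (\<forall>p\<in>S. (\<lambda>q. hderiv S j f q hs) differentiable (at p within S))) \<and>
     (\<forall>hs. length hs = m \<longrightarrow> continuous_on S (\<lambda>q. hderiv S m f q hs))"

definition DD :: "('a \<Rightarrow> real) \<Rightarrow> ('a \<times> real) set" where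
  "DD N = {(x, y). N x \<le> 1 \<and> \<bar>y\<bar> \<le> 1}"

definition DD0 :: "('a \<Rightarrow> real) \<Rightarrow> ('a \<times> real) set" where
  "DD0 N = {(x, y). N x \<le> 1 \<and> y = 0}"

definition DDstar :: "('a \<Rightarrow> real) \<Rightarrow> ('a \<times> real) set" where
  "DDstar N = DD N - DD0 N"

end

theory Submission
  imports Defs
begin

text \<open>
  On each side of D_0 the map is T = const + |y|^\<alpha> (B + \<phi>), so by the Leibniz rule D^k T is a
  sum of 2^k products D^a |y|^\<alpha> \<cdot> D^b (B + \<phi>) with a + b = k. The first factor is
  O(|y|^(\<alpha> - a)). For the second, multilinearity splits every direction into a horizontal part
  (h, 0) and a vertical part (0, 1); by symmetry of derivatives the horizontal directions can be
  moved to the front, where (L1) bounds the derivative by K |y|^(\<gamma> - m) \<le> K |y|^(-b), since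
  \<gamma> \<ge> 0 and |y| \<le> 1. All derivatives are taken within the two halves of D^*; these are
  convex with nonempty interior (intersected with an open set), which makes derivatives within
  them unique and symmetric.
\<close>

section \<open>Derivatives within sets with an interior cone condition\<close>

text \<open>Every point of \<open>S\<close> is the apex of a small open cone contained in \<open>S\<close>: weaker than
  openness, but still enough to determine derivatives within \<open>S\<close>.\<close>

definition cone_condition :: "'v::real_normed_vector set \<Rightarrow> bool" where
  "cone_condition S \<longleftrightarrow> (\<forall>q\<in>S. \<exists>w r \<delta>. r > 0 \<and> \<delta> > 0 \<and>
      (\<forall>v t. norm v < r \<longrightarrow> 0 < t \<longrightarrow> t \<le> \<delta> \<longrightarrow> q + t *\<^sub>R (w + v) \<in> S))"

lemma has_derivative_unique_along_segment:
  assumes d1: "(f has_derivative f1) (at q within S)"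
    and d2: "(f has_derivative f2) (at q within S)"
    and \<delta>: "\<delta> > 0" and seg: "\<And>t. 0 \<le> t \<Longrightarrow> t \<le> \<delta> \<Longrightarrow> q + t *\<^sub>R u \<in> S"
  shows "f1 u = f2 u"
proof -
  let ?g = "\<lambda>t::real. q + t *\<^sub>R u"
  have g: "(?g has_derivative (\<lambda>d. d *\<^sub>R u)) (at 0 within {0..\<delta>})"
    by (auto intro!: derivative_eq_intros)
  have sub: "?g ` {0..\<delta>} \<subseteq> S" using seg by auto
  have "(f \<circ> ?g has_derivative f1 \<circ> (\<lambda>d. d *\<^sub>R u)) (at 0 within {0..\<delta>})"
    "(f \<circ> ?g has_derivative f2 \<circ> (\<lambda>d. d *\<^sub>R u)) (at 0 within {0..\<delta>})"
    using diff_chain_within[OF g has_derivative_subset[OF _ sub]] d1 d2 by auto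
  then have "f1 \<circ> (\<lambda>d. d *\<^sub>R u) = f2 \<circ> (\<lambda>d. d *\<^sub>R u)"
    using \<delta> by (intro frechet_derivative_unique_within_closed_interval[of 0 \<delta>]) auto
  then show ?thesis by (metis comp_apply scaleR_one)
qed

lemma linear_eq_0_on_ball:
  assumes L: "linear L" and r: "r > 0" and zero: "\<And>v. norm v < r \<Longrightarrow> L (w + v) = 0"
  shows "L = (\<lambda>h. 0)"
proof
  fix h
  show "L h = 0"
  proof (cases "h = 0")
    case True then show ?thesis by (simp add: linear_0[OF L])
  next
    case False
    define c where "c = r / (2 * norm h)"
    have "c > 0" "norm (c *\<^sub>R h) < r" using r False by (simp_all add: c_def)
    then show ?thesis using zero[of 0] zero[of "c *\<^sub>R h"] r
      by (simp add: linear_add[OF L] linear_scale[OF L])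
  qed
qed

lemma has_derivative_unique_cone:
  assumes S: "cone_condition S" and q: "q \<in> S"
    and d1: "(f has_derivative f1) (at q within S)"
    and d2: "(f has_derivative f2) (at q within S)"
  shows "f1 = f2"
proof -
  obtain w r \<delta> where r: "r > 0" and \<delta>: "\<delta> > 0"
    and cone: "\<And>v t. norm v < r \<Longrightarrow> 0 < t \<Longrightarrow> t \<le> \<delta> \<Longrightarrow> q + t *\<^sub>R (w + v) \<in> S"
    using S q unfolding cone_condition_def by blast
  have lin: "linear (\<lambda>h. f1 h - f2 h)"
    using d1 d2 by (intro linear_compose_sub has_derivative_linear) auto
  have "f1 (w + v) - f2 (w + v) = 0" if "norm v < r" for v
  proof -
    have "q + t *\<^sub>R (w + v) \<in> S" if "0 \<le> t" "t \<le> \<delta>" for t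
      using cone[OF \<open>norm v < r\<close>, of t] q that by (cases "t = 0") auto
    then show ?thesis using has_derivative_unique_along_segment[OF d1 d2 \<delta>] by simp
  qed
  then have "(\<lambda>h. f1 h - f2 h) = (\<lambda>h. 0)" by (rule linear_eq_0_on_ball[OF lin r])
  then show ?thesis by (simp add: fun_eq_iff)
qed

lemma frechet_derivative_cone:
  assumes "cone_condition S" "q \<in> S" "(f has_derivative D) (at q within S)"
  shows "frechet_derivative f (at q within S) = D"
  using has_derivative_unique_cone[OF assms(1,2) _ assms(3)] assms(3)
  by (metis differentiableI frechet_derivative_works)

lemma cone_condition_convex:
  fixes C :: "'v::real_normed_vector set"
  assumes C: "convex C" and c: "c \<in> interior C"
  shows "cone_condition C"
  unfolding cone_condition_def
proof
  fix q assume q: "q \<in> C"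
  obtain r where r: "r > 0" "ball c r \<subseteq> C" using c by (meson mem_interior)
  have "q + t *\<^sub>R ((c - q) + v) \<in> C" if "norm v < r" "0 < t" "t \<le> 1" for v t
  proof -
    have "c + v \<in> C" using r that(1) by (auto simp: dist_norm)
    then have "(1 - t) *\<^sub>R q + t *\<^sub>R (c + v) \<in> C"
      using C q that(2,3) by (intro convexD) auto
    then show ?thesis by (simp add: algebra_simps)
  qed
  with r(1) show "\<exists>w r \<delta>. r > 0 \<and> \<delta> > 0 \<and>
      (\<forall>v t. norm v < r \<longrightarrow> 0 < t \<longrightarrow> t \<le> \<delta> \<longrightarrow> q + t *\<^sub>R (w + v) \<in> C)"
    by (intro exI[of _ "c - q"] exI[of _ r] exI[of _ 1]) auto
qed

lemma cone_condition_Int_open: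
  assumes C: "cone_condition C" and V: "open V"
  shows "cone_condition (V \<inter> C)"
  unfolding cone_condition_def
proof
  fix q assume q: "q \<in> V \<inter> C"
  obtain w r \<delta> where r: "r > 0" and \<delta>: "\<delta> > 0"
    and cone: "\<And>v t. norm v < r \<Longrightarrow> 0 < t \<Longrightarrow> t \<le> \<delta> \<Longrightarrow> q + t *\<^sub>R (w + v) \<in> C"
    using C q unfolding cone_condition_def by blast
  obtain \<epsilon> where \<epsilon>: "\<epsilon> > 0" "ball q \<epsilon> \<subseteq> V" using V q open_contains_ball by blast
  define X where "X = norm w + r"
  have X: "X > 0" using r by (simp add: X_def add_nonneg_pos)
  define \<delta>' where "\<delta>' = min \<delta> (\<epsilon> / (2 * X))"
  have \<delta>': "\<delta>' > 0" "\<delta>' \<le> \<delta>" using \<delta> \<epsilon> X by (simp_all add: \<delta>'_def)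
  have "\<delta>' * X \<le> \<epsilon> / (2 * X) * X" using X by (intro mult_right_mono) (auto simp: \<delta>'_def)
  also have "\<dots> < \<epsilon>" using X \<epsilon> by simp
  finally have \<delta>'_small: "\<delta>' * X < \<epsilon>" .
  have "q + t *\<^sub>R (w + v) \<in> V" if "norm v < r" "0 < t" "t \<le> \<delta>'" for v t
  proof -
    have "norm (t *\<^sub>R (w + v)) \<le> t * X"
      using that norm_triangle_ineq[of w v] by (simp add: X_def mult_left_mono)
    also have "\<dots> \<le> \<delta>' * X" using that X by (intro mult_right_mono) auto
    finally show ?thesis using \<delta>'_small \<epsilon>(2) by (auto simp: dist_norm)
  qed
  with cone r \<delta>' show "\<exists>w r \<delta>. r > 0 \<and> \<delta> > 0 \<and>
      (\<forall>v t. norm v < r \<longrightarrow> 0 < t \<longrightarrow> t \<le> \<delta> \<longrightarrow> q + t *\<^sub>R (w + v) \<in> V \<inter> C)"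
    by (intro exI[of _ w] exI[of _ r] exI[of _ \<delta>']) auto
qed

lemma dense_interior_Int_open:
  assumes C: "C \<subseteq> closure (interior C)" and V: "open V"
  shows "V \<inter> C \<subseteq> closure (interior (V \<inter> C))"
proof -
  have "V \<inter> C \<subseteq> V \<inter> closure (interior C)" using C by blast
  also have "\<dots> \<subseteq> closure (V \<inter> interior C)" by (rule open_Int_closure_subset[OF V])
  also have "V \<inter> interior C = interior (V \<inter> C)" using V by (simp add: interior_open)
  finally show ?thesis .
qed

section \<open>Iterated derivatives within a set\<close>

lemma hderiv_append:
  "hderiv S (length xs + length ys) f p (xs @ ys) =
   hderiv S (length xs) (\<lambda>q. hderiv S (length ys) f q ys) p xs"
proof (induction xs arbitrary: p)
  case Nil then show ?case by simp
next
  case (Cons x xs)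
  then have "(\<lambda>q. hderiv S (length xs + length ys) f q (xs @ ys)) =
             (\<lambda>q. hderiv S (length xs) (\<lambda>q. hderiv S (length ys) f q ys) q xs)"
    by auto
  then show ?case by simp
qed

lemma has_derivative_cong_within:
  assumes "\<forall>q\<in>S. g q = g' q" "p \<in> S"
  shows "(g has_derivative D) (at p within S) \<longleftrightarrow> (g' has_derivative D) (at p within S)"
  using assms has_derivative_transform by metis

lemma frechet_derivative_cong_within:
  assumes "\<forall>q\<in>S. g q = g' q" "p \<in> S"
  shows "frechet_derivative g (at p within S) = frechet_derivative g' (at p within S)"
  unfolding frechet_derivative_def using has_derivative_cong_within[OF assms] by simp

lemma differentiable_cong_within:
  assumes "\<forall>q\<in>S. g q = g' q" "p \<in> S"
  shows "g differentiable (at p within S) \<longleftrightarrow> g' differentiable (at p within S)"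
  unfolding differentiable_def using has_derivative_cong_within[OF assms] by simp

lemma hderiv_cong_within:
  assumes "\<forall>q\<in>S. f q = f' q" "p \<in> S"
  shows "hderiv S j f p hs = hderiv S j f' p hs"
  using assms(2)
proof (induction j arbitrary: p hs)
  case 0 then show ?case using assms(1) by simp
next
  case (Suc j)
  then have "\<forall>q\<in>S. hderiv S j f q (tl hs) = hderiv S j f' q (tl hs)" by blast
  from frechet_derivative_cong_within[OF this Suc.prems] show ?case by simp
qed

lemma hderiv_localize:
  assumes W: "open W" and SW: "S \<inter> W = S' \<inter> W" and ff: "\<forall>q\<in>S \<inter> W. f q = f' q"
    and p: "p \<in> S \<inter> W"
  shows "hderiv S j f p hs = hderiv S' j f' p hs"
  using p
proof (induction j arbitrary: p hs)
  case 0 then show ?case using ff by simp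
next
  case (Suc j)
  have agree: "\<forall>q\<in>S \<inter> W. hderiv S j f q (tl hs) = hderiv S' j f' q (tl hs)" using Suc.IH by blast
  have "at p within S = at p within (S \<inter> W)" "at p within S' = at p within (S \<inter> W)"
    using Suc.prems W SW by (intro at_within_nhd[of p W]; auto)+
  then show ?case using frechet_derivative_cong_within[OF agree Suc.prems] by simp
qed

definition differentiable_upto ::
    "nat \<Rightarrow> ('v::real_normed_vector \<Rightarrow> 'w::real_normed_vector) \<Rightarrow> 'v set \<Rightarrow> bool" where
  "differentiable_upto n f S \<longleftrightarrow> (\<forall>j<n. \<forall>hs. length hs = j \<longrightarrow>
      (\<forall>p\<in>S. (\<lambda>q. hderiv S j f q hs) differentiable (at p within S)))"

lemma Ck_on_imp_differentiable_upto: "Ck_on m f S \<Longrightarrow> differentiable_upto m f S"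
  unfolding Ck_on_def differentiable_upto_def by blast

lemma differentiable_upto_mono: "differentiable_upto n f S \<Longrightarrow> m \<le> n \<Longrightarrow> differentiable_upto m f S"
  unfolding differentiable_upto_def by auto

lemma differentiable_uptoD:
  "differentiable_upto n f S \<Longrightarrow> j < n \<Longrightarrow> length hs = j \<Longrightarrow> p \<in> S \<Longrightarrow>
   (\<lambda>q. hderiv S j f q hs) differentiable (at p within S)"
  unfolding differentiable_upto_def by blast

lemma has_derivative_hderiv:
  "differentiable_upto n f S \<Longrightarrow> j < n \<Longrightarrow> length hs = j \<Longrightarrow> p \<in> S \<Longrightarrow>
   ((\<lambda>q. hderiv S j f q hs) has_derivative
      frechet_derivative (\<lambda>q. hderiv S j f q hs) (at p within S)) (at p within S)"
  using differentiable_uptoD frechet_derivative_works by blast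

lemma differentiable_upto_hderiv:
  assumes "differentiable_upto n f S"
  shows "differentiable_upto (n - length ys) (\<lambda>q. hderiv S (length ys) f q ys) S"
  unfolding differentiable_upto_def
proof (intro allI impI ballI)
  fix j and hs :: "'a list" and p
  assume j: "j < n - length ys" and l: "length hs = j" and p: "p \<in> S"
  have "(\<lambda>q. hderiv S j (\<lambda>q. hderiv S (length ys) f q ys) q hs) =
        (\<lambda>q. hderiv S (length (hs @ ys)) f q (hs @ ys))"
    using hderiv_append[of S hs ys f] l by auto
  then show "(\<lambda>q. hderiv S j (\<lambda>q. hderiv S (length ys) f q ys) q hs) differentiable (at p within S)"
    using differentiable_uptoD[OF assms _ refl p, of "hs @ ys"] j l by simp
qed

lemma hderiv_linear_slot:
  assumes S: "cone_condition S"
  shows "differentiable_upto n f S \<Longrightarrow> length pre + 1 + length post = n \<Longrightarrow> p \<in> S \<Longrightarrow>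
    hderiv S n f p (pre @ (a + c *\<^sub>R b) # post) =
    hderiv S n f p (pre @ a # post) + c *\<^sub>R hderiv S n f p (pre @ b # post)"
proof (induction pre arbitrary: n p)
  case Nil
  have "(\<lambda>q. hderiv S (length post) f q post) differentiable (at p within S)"
    using differentiable_uptoD[OF Nil.prems(1), of "length post" post p] Nil.prems by auto
  then have "linear (frechet_derivative (\<lambda>q. hderiv S (length post) f q post) (at p within S))"
    by (rule linear_frechet_derivative)
  then show ?case using Nil.prems(2) by (auto simp: linear_add linear_scale)
next
  case (Cons u pre)
  then obtain m where m: "n = Suc m" "length pre + 1 + length post = m" by auto
  have f: "differentiable_upto m f S" using Cons.prems(1) m differentiable_upto_mono by fastforce
  let ?h = "\<lambda>x q. hderiv S m f q (pre @ x # post)"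
  let ?D = "\<lambda>x. frechet_derivative (?h x) (at p within S)"
  have "(?h x has_derivative ?D x) (at p within S)" for x
    using has_derivative_hderiv[OF Cons.prems(1), of m "pre @ x # post" p] m Cons.prems by simp
  then have "((\<lambda>q. ?h a q + c *\<^sub>R ?h b q) has_derivative (\<lambda>v. ?D a v + c *\<^sub>R ?D b v))
      (at p within S)"
    by (intro derivative_eq_intros) auto
  then have sum: "frechet_derivative (\<lambda>q. ?h a q + c *\<^sub>R ?h b q) (at p within S) u = ?D a u + c *\<^sub>R ?D b u"
    by (simp add: frechet_derivative_cone[OF S Cons.prems(3)])
  have "\<forall>q\<in>S. ?h (a + c *\<^sub>R b) q = ?h a q + c *\<^sub>R ?h b q"
    using Cons.IH[OF f m(2)] by blast
  then have cong: "?D (a + c *\<^sub>R b) = frechet_derivative (\<lambda>q. ?h a q + c *\<^sub>R ?h b q) (at p within S)"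
    by (rule frechet_derivative_cong_within[OF _ Cons.prems(3)])
  have unfold: "hderiv S n f p ((u # pre) @ x # post) = ?D x u" for x
    using m by simp
  show ?case unfolding unfold cong by (rule sum)
qed

section \<open>Symmetry of iterated derivatives\<close>

lemma has_vector_derivative_line:
  assumes "g differentiable (at (a + t *\<^sub>R u))"
  shows "((\<lambda>t. g (a + t *\<^sub>R u)) has_vector_derivative frechet_derivative g (at (a + t *\<^sub>R u)) u)
           (at t within T)"
proof -
  let ?D = "frechet_derivative g (at (a + t *\<^sub>R u))"
  have g: "(g has_derivative ?D) (at (a + t *\<^sub>R u))"
    using assms by (simp add: frechet_derivative_works)
  have "((\<lambda>t. a + t *\<^sub>R u) has_derivative (\<lambda>d. d *\<^sub>R u)) (at t within T)"
    by (auto intro!: derivative_eq_intros)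
  from has_derivative_in_compose[OF this has_derivative_at_withinI[OF g]]
  show ?thesis
    unfolding has_vector_derivative_def
    by (simp add: linear_scale[OF has_derivative_linear[OF g]])
qed

lemma second_difference_estimate:
  fixes g :: "'v::real_normed_vector \<Rightarrow> 'w::real_normed_vector"
  assumes dg: "\<forall>x\<in>ball q r. g differentiable (at x)" and L: "linear L" and e: "e \<ge> 0"
    and R: "\<And>w. norm w < \<delta> \<Longrightarrow>
      norm (frechet_derivative g (at (q + w)) u - frechet_derivative g (at q) u - L w) \<le> e * norm w"
    and s: "0 < s" "s * (norm u + norm v) < min \<delta> r"
  shows "norm ((g (q + s *\<^sub>R u + s *\<^sub>R v) - g (q + s *\<^sub>R u) - g (q + s *\<^sub>R v) + g q) - (s * s) *\<^sub>R L v)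
       \<le> e * (s * s) * (2 * norm u + 3 * norm v)"
proof -
  let ?H = "\<lambda>x. frechet_derivative g (at x) u"
  have small: "norm (t *\<^sub>R u + s' *\<^sub>R v) < min \<delta> r"
    if "0 \<le> t" "t \<le> s" "0 \<le> s'" "s' \<le> s" for t s'
    using that s(2) norm_triangle_ineq[of "t *\<^sub>R u" "s' *\<^sub>R v"]
      mult_right_mono[of t s "norm u"] mult_right_mono[of s' s "norm v"]
    by (simp add: distrib_left)
  \<comment> \<open>mean value theorem for \<open>\<phi>\<close>, whose derivative varies by \<open>O(e s)\<close> on \<open>[0, s]\<close>\<close>
  define \<phi> where "\<phi> t = g (q + s *\<^sub>R v + t *\<^sub>R u) - g (q + t *\<^sub>R u)" for t
  define \<phi>' where "\<phi>' t = ?H (q + s *\<^sub>R v + t *\<^sub>R u) - ?H (q + t *\<^sub>R u)" for t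
  have "(\<phi> has_vector_derivative \<phi>' t) (at t within {0..s})" if "t \<in> {0..s}" for t
  proof -
    have inball: "q + w \<in> ball q r" if "norm w < r" for w
      using that by (simp add: dist_norm)
    have "q + s *\<^sub>R v + t *\<^sub>R u \<in> ball q r" "q + t *\<^sub>R u \<in> ball q r"
      using inball[of "s *\<^sub>R v + t *\<^sub>R u"] inball[of "t *\<^sub>R u"] small[of t s] small[of t 0] that s
      by (simp_all add: add.assoc add.commute[of "s *\<^sub>R v"])
    then show ?thesis
      unfolding \<phi>_def \<phi>'_def using dg
      by (intro has_vector_derivative_diff has_vector_derivative_line) auto
  qed
  moreover have "norm (\<phi>' t - \<phi>' 0) \<le> e * (2 * s * norm u + 2 * s * norm v)"
    if "t \<in> {0..s}" for t
  proof -
    have t: "0 \<le> t" "t \<le> s" using that by auto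
    have "\<phi>' t - \<phi>' 0 = (?H (q + (t *\<^sub>R u + s *\<^sub>R v)) - ?H q - L (t *\<^sub>R u + s *\<^sub>R v))
          - (?H (q + t *\<^sub>R u) - ?H q - L (t *\<^sub>R u)) - (?H (q + s *\<^sub>R v) - ?H q - L (s *\<^sub>R v))"
      unfolding \<phi>'_def by (simp add: linear_add[OF L] algebra_simps)
    then have "norm (\<phi>' t - \<phi>' 0) \<le>
        e * norm (t *\<^sub>R u + s *\<^sub>R v) + e * norm (t *\<^sub>R u) + e * norm (s *\<^sub>R v)"
      using R[of "t *\<^sub>R u + s *\<^sub>R v"] R[of "t *\<^sub>R u"] R[of "s *\<^sub>R v"]
        small[OF t, of s] small[OF t, of 0] small[of 0 s] s
      by (smt (verit) norm_triangle_ineq4 norm_triangle_ineq add.right_neutral min_less_iff_conj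
          scale_zero_left add.left_neutral)
    also have "\<dots> \<le> e * (s * norm u + s * norm v) + e * (s * norm u) + e * (s * norm v)"
      using t s e norm_triangle_ineq[of "t *\<^sub>R u" "s *\<^sub>R v"] mult_right_mono[of t s "norm u"]
      by (intro add_mono mult_left_mono) auto
    finally show ?thesis by (simp add: algebra_simps)
  qed
  ultimately have mvt: "norm (\<phi> s - \<phi> 0 - s *\<^sub>R \<phi>' 0) \<le> s * (e * (2 * s * norm u + 2 * s * norm v))"
    using vector_differentiable_bound_linearization[of "{0..s}" \<phi> \<phi>' 0 s] s
    by (simp add: closed_segment_eq_real_ivl)
  let ?P = "\<phi> s - \<phi> 0 - s *\<^sub>R \<phi>' 0"
  let ?Q = "s *\<^sub>R (?H (q + s *\<^sub>R v) - ?H q - L (s *\<^sub>R v))"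
  have Q: "norm ?Q \<le> s * (e * (s * norm v))"
    using R[of "s *\<^sub>R v"] small[of 0 s] s by (simp add: mult_left_mono)
  have "(g (q + s *\<^sub>R u + s *\<^sub>R v) - g (q + s *\<^sub>R u) - g (q + s *\<^sub>R v) + g q) - (s * s) *\<^sub>R L v
      = ?P + ?Q"
    unfolding \<phi>_def \<phi>'_def by (simp add: linear_scale[OF L] algebra_simps)
  then have "norm ((g (q + s *\<^sub>R u + s *\<^sub>R v) - g (q + s *\<^sub>R u) - g (q + s *\<^sub>R v) + g q)
      - (s * s) *\<^sub>R L v) \<le> norm ?P + norm ?Q"
    by (simp only: norm_triangle_ineq)
  also have "\<dots> \<le> e * (s * s) * (2 * norm u + 3 * norm v)"
    using mvt Q by (simp add: algebra_simps)
  finally show ?thesis .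
qed

lemma second_difference_approx:
  fixes g :: "'v::real_normed_vector \<Rightarrow> 'w::real_normed_vector"
  assumes r: "r > 0" and dg: "\<forall>x\<in>ball q r. g differentiable (at x)"
    and dH: "((\<lambda>x. frechet_derivative g (at x) u) has_derivative L) (at q)"
    and e: "e > 0"
  shows "\<exists>s0>0. \<forall>s. 0 < s \<and> s \<le> s0 \<longrightarrow>
     norm ((g (q + s *\<^sub>R u + s *\<^sub>R v) - g (q + s *\<^sub>R u) - g (q + s *\<^sub>R v) + g q) - (s * s) *\<^sub>R L v)
       \<le> e * (s * s) * (2 * norm u + 3 * norm v)"
proof -
  have L: "linear L" using dH by (rule has_derivative_linear)
  obtain \<delta> where \<delta>: "\<delta> > 0" and HD: "\<And>y. norm (y - q) < \<delta> \<Longrightarrow>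
        norm (frechet_derivative g (at y) u - frechet_derivative g (at q) u - L (y - q)) \<le> e * norm (y - q)"
    using dH e unfolding has_derivative_at_alt by blast
  define X where "X = norm u + norm v + 1"
  have X: "X > 0" "norm u + norm v \<le> X" unfolding X_def by (smt (verit) norm_ge_zero)+
  define s0 where "s0 = min \<delta> r / (2 * X)"
  have s0: "s0 > 0" using \<delta> r X by (simp add: s0_def)
  have "s0 * (norm u + norm v) \<le> s0 * X" using s0 X by simp
  also have "\<dots> < min \<delta> r" using \<delta> r X by (simp add: s0_def min_def)
  finally have s0_small: "s0 * (norm u + norm v) < min \<delta> r" .
  have "s * (norm u + norm v) < min \<delta> r" if "0 < s" "s \<le> s0" for s
    using that s0_small by (smt (verit) mult_right_mono norm_ge_zero)
  then show ?thesis
    using second_difference_estimate[OF dg L less_imp_le[OF e], of \<delta>] HD[of "q + _"] s0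
    by (intro exI[of _ s0]) auto
qed

lemma frechet_derivative_symmetric:
  fixes g :: "'v::real_normed_vector \<Rightarrow> 'w::real_normed_vector"
  assumes r: "r > 0" and dg: "\<forall>x\<in>ball q r. g differentiable (at x)"
    and du: "(\<lambda>x. frechet_derivative g (at x) u) differentiable (at q)"
    and dv: "(\<lambda>x. frechet_derivative g (at x) v) differentiable (at q)"
  shows "frechet_derivative (\<lambda>x. frechet_derivative g (at x) u) (at q) v =
         frechet_derivative (\<lambda>x. frechet_derivative g (at x) v) (at q) u"
proof -
  let ?Lu = "frechet_derivative (\<lambda>x. frechet_derivative g (at x) u) (at q)"
  let ?Lv = "frechet_derivative (\<lambda>x. frechet_derivative g (at x) v) (at q)"
  let ?C = "5 * (norm u + norm v) + 1"
  have C: "?C > 0" by (intro add_nonneg_pos) auto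
  have Du: "((\<lambda>x. frechet_derivative g (at x) u) has_derivative ?Lu) (at q)"
    using du by (simp add: frechet_derivative_works)
  have Dv: "((\<lambda>x. frechet_derivative g (at x) v) has_derivative ?Lv) (at q)"
    using dv by (simp add: frechet_derivative_works)
  \<comment> \<open>both mixed derivatives are the limit of the same second difference divided by \<open>s\<^sup>2\<close>\<close>
  have "norm (?Lu v - ?Lv u) \<le> 0 + e" if e: "e > 0" for e
  proof -
    define e' where "e' = e / ?C"
    have e': "e' > 0" "e' * ?C = e" using e C by (simp_all add: e'_def)
    obtain s1 where s1: "s1 > 0" and S1: "\<And>s. 0 < s \<and> s \<le> s1 \<Longrightarrow>
       norm ((g (q + s *\<^sub>R u + s *\<^sub>R v) - g (q + s *\<^sub>R u) - g (q + s *\<^sub>R v) + g q) - (s * s) *\<^sub>R ?Lu v)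
         \<le> e' * (s * s) * (2 * norm u + 3 * norm v)"
      using second_difference_approx[OF r dg Du e'(1), of v] by blast
    obtain s2 where s2: "s2 > 0" and S2: "\<And>s. 0 < s \<and> s \<le> s2 \<Longrightarrow>
       norm ((g (q + s *\<^sub>R v + s *\<^sub>R u) - g (q + s *\<^sub>R v) - g (q + s *\<^sub>R u) + g q) - (s * s) *\<^sub>R ?Lv u)
         \<le> e' * (s * s) * (2 * norm v + 3 * norm u)"
      using second_difference_approx[OF r dg Dv e'(1), of u] by blast
    define s where "s = min s1 s2"
    have s: "s > 0" "s \<le> s1" "s \<le> s2" using s1 s2 by (auto simp: s_def)
    let ?D = "g (q + s *\<^sub>R u + s *\<^sub>R v) - g (q + s *\<^sub>R u) - g (q + s *\<^sub>R v) + g q"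
    have "q + s *\<^sub>R v + s *\<^sub>R u = q + s *\<^sub>R u + s *\<^sub>R v" by (simp add: algebra_simps)
    then have D_eq: "g (q + s *\<^sub>R v + s *\<^sub>R u) - g (q + s *\<^sub>R v) - g (q + s *\<^sub>R u) + g q = ?D"
      by (simp only:) (simp add: algebra_simps)
    have A: "norm (?D - (s * s) *\<^sub>R ?Lv u) \<le> e' * (s * s) * (2 * norm v + 3 * norm u)"
      using S2[of s, unfolded D_eq] s by blast
    have B: "norm (?D - (s * s) *\<^sub>R ?Lu v) \<le> e' * (s * s) * (2 * norm u + 3 * norm v)"
      using S1 s by blast
    have "(s * s) *\<^sub>R (?Lu v - ?Lv u) = (?D - (s * s) *\<^sub>R ?Lv u) - (?D - (s * s) *\<^sub>R ?Lu v)"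
      by (simp add: algebra_simps)
    then have "norm ((s * s) *\<^sub>R (?Lu v - ?Lv u)) \<le>
        e' * (s * s) * (2 * norm v + 3 * norm u) + e' * (s * s) * (2 * norm u + 3 * norm v)"
      using A B norm_triangle_ineq4[of "?D - (s * s) *\<^sub>R ?Lv u" "?D - (s * s) *\<^sub>R ?Lu v"] s
      by simp
    also have "\<dots> = (s * s) * (e' * ?C) - (s * s) * e'"
      by (simp add: algebra_simps)
    also have "\<dots> \<le> (s * s) * (e' * ?C)"
      using s e'(1) by simp
    finally have "norm (?Lu v - ?Lv u) \<le> e' * ?C" using s by (simp add: mult_le_cancel_left_pos)
    then show ?thesis using e'(2) by linarith
  qed
  then have "norm (?Lu v - ?Lv u) \<le> 0" by (rule field_le_epsilon)
  then show ?thesis by simp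
qed

lemma hderiv_2_swap_interior:
  fixes g :: "'v::real_normed_vector \<Rightarrow> 'w::real_normed_vector"
  assumes g: "differentiable_upto 2 g S" and p: "p \<in> interior S"
  shows "hderiv S 2 g p [v, u] = hderiv S 2 g p [u, v]"
proof -
  obtain r where r: "r > 0" "ball p r \<subseteq> interior S"
    using p open_interior open_contains_ball by blast
  have inS: "x \<in> S" if "x \<in> ball p r" for x using r that interior_subset by blast
  have at_eq: "at x within S = at x" if "x \<in> ball p r" for x
    using r that by (intro at_within_interior) blast
  have dg: "\<forall>x\<in>ball p r. g differentiable (at x)"
    using differentiable_uptoD[OF g, of 0 "[]"] inS at_eq by fastforce
  have H: "\<forall>x\<in>ball p r. hderiv S 1 g x [w] = frechet_derivative g (at x) w" for w
    using at_eq by simp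
  have d1: "(\<lambda>q. hderiv S 1 g q [w]) differentiable (at p)" for w
    using differentiable_uptoD[OF g, of 1 "[w]" p] p interior_subset at_eq[of p] r by auto
  have fd: "frechet_derivative (\<lambda>q. hderiv S 1 g q [w]) (at p) =
            frechet_derivative (\<lambda>x. frechet_derivative g (at x) w) (at p)" for w
  proof (rule frechet_derivative_transform_within_open[OF d1])
    show "open (ball p r)" "p \<in> ball p r" using r by auto
    show "hderiv S 1 g x [w] = frechet_derivative g (at x) w" if "x \<in> ball p r" for x
      using H that by blast
  qed
  have dH: "(\<lambda>x. frechet_derivative g (at x) w) differentiable (at p)" for w
  proof -
    obtain D where "((\<lambda>q. hderiv S 1 g q [w]) has_derivative D) (at p)"
      using d1 by (auto simp: differentiable_def)
    then have "((\<lambda>x. frechet_derivative g (at x) w) has_derivative D) (at p)"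
    proof (rule has_derivative_transform_within_open[of _ _ p UNIV "ball p r"])
      show "open (ball p r)" "p \<in> ball p r" using r by auto
      show "hderiv S 1 g x [w] = frechet_derivative g (at x) w" if "x \<in> ball p r" for x
        using H that by blast
    qed
    then show ?thesis by (auto simp: differentiable_def)
  qed
  have atp: "at p within S = at p" using at_eq[of p] r by simp
  have unfold2: "hderiv S 2 g p [a, b] = frechet_derivative (\<lambda>q. hderiv S 1 g q [b]) (at p) a" for a b
    using hderiv.simps(2)[of S 1 g p "[a, b]"] by (simp del: hderiv.simps add: numeral_2_eq_2 atp)
  have "hderiv S 2 g p [v, u] = frechet_derivative (\<lambda>q. hderiv S 1 g q [u]) (at p) v"
    by (rule unfold2)
  also have "\<dots> = frechet_derivative (\<lambda>q. hderiv S 1 g q [v]) (at p) u"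
    unfolding fd by (rule frechet_derivative_symmetric[OF r(1) dg dH dH])
  also have "\<dots> = hderiv S 2 g p [u, v]"
    by (rule unfold2[symmetric])
  finally show ?thesis .
qed

lemma continuous_on_eq_0_dense_interior:
  fixes Q :: "'v::real_normed_vector \<Rightarrow> 'w::real_normed_vector"
  assumes Q: "continuous_on S Q" and zero: "\<forall>x\<in>interior S. Q x = 0"
    and dense: "S \<subseteq> closure (interior S)" and p: "p \<in> S"
  shows "Q p = 0"
proof -
  obtain T where T: "closed T" "{x \<in> S. Q x = 0} = S \<inter> T"
    using continuous_closedin_preimage_constant[OF Q, of 0] closedin_closed by blast
  have "interior S \<subseteq> T" using zero T(2) interior_subset by blast
  then have "closure (interior S) \<subseteq> T" using T(1) by (rule closure_minimal)
  then show ?thesis using p dense T(2) by blast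
qed

lemma hderiv_2_swap:
  fixes g :: "'v::real_normed_vector \<Rightarrow> 'w::real_normed_vector"
  assumes g: "differentiable_upto 3 g S" and dense: "S \<subseteq> closure (interior S)" and p: "p \<in> S"
  shows "hderiv S 2 g p [v, u] = hderiv S 2 g p [u, v]"
proof -
  let ?Q = "\<lambda>x. hderiv S 2 g x [v, u] - hderiv S 2 g x [u, v]"
  have "continuous (at x within S) (\<lambda>x. hderiv S 2 g x hs)" if "x \<in> S" "length hs = 2" for x hs
    using differentiable_uptoD[OF g, of 2 hs x] that by (simp add: differentiable_imp_continuous_within)
  then have "continuous_on S ?Q"
    unfolding continuous_on_eq_continuous_within by (auto intro!: continuous_intros)
  moreover have "\<forall>x\<in>interior S. ?Q x = 0"
    using hderiv_2_swap_interior[OF differentiable_upto_mono[OF g]] by simp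
  ultimately have "?Q p = 0" using continuous_on_eq_0_dense_interior dense p by blast
  then show ?thesis by simp
qed

lemma hderiv_swap:
  fixes f :: "'v::real_normed_vector \<Rightarrow> 'w::real_normed_vector"
  assumes f: "differentiable_upto (length pre + 3 + length post) f S"
    and dense: "S \<subseteq> closure (interior S)" and p: "p \<in> S"
  shows "hderiv S (length pre + 2 + length post) f p (pre @ u # v # post) =
         hderiv S (length pre + 2 + length post) f p (pre @ v # u # post)"
proof -
  let ?g = "\<lambda>q. hderiv S (length post) f q post"
  have "differentiable_upto 3 ?g S"
    using differentiable_upto_hderiv[OF f, of post] differentiable_upto_mono by fastforce
  moreover have "hderiv S (length ([a, b] @ post)) f q ([a, b] @ post) = hderiv S 2 ?g q [a, b]" for a b q
    using hderiv_append[of S "[a,b]" post f q] by (simp add: numeral_2_eq_2)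
  ultimately have "\<forall>q\<in>S. hderiv S (length ([u, v] @ post)) f q ([u, v] @ post) =
                         hderiv S (length ([v, u] @ post)) f q ([v, u] @ post)"
    using hderiv_2_swap[OF _ dense] by metis
  from hderiv_cong_within[OF this p, of "length pre" pre] show ?thesis
    using hderiv_append[of S pre "[u, v] @ post" f p] hderiv_append[of S pre "[v, u] @ post" f p]
    by (simp add: add.assoc)
qed

lemma adjacent_swap_invariant_move:
  assumes swap: "\<And>pre u v post. length pre + 2 + length post = n \<Longrightarrow>
      M (pre @ u # v # post) = M (pre @ v # u # post)"
  shows "length pre + 1 + length ys + length zs = n \<Longrightarrow>
         M (pre @ x # ys @ zs) = M (pre @ ys @ x # zs)"
proof (induction ys arbitrary: pre)
  case Nil then show ?case by simp
next
  case (Cons a ys)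
  have "M (pre @ x # (a # ys) @ zs) = M ((pre @ [a]) @ x # ys @ zs)"
    using swap[of pre "ys @ zs" x a] Cons.prems by simp
  also have "\<dots> = M ((pre @ [a]) @ ys @ x # zs)" using Cons.IH[of "pre @ [a]"] Cons.prems by simp
  finally show ?case by simp
qed

lemma adjacent_swap_invariant_mset:
  assumes swap: "\<And>pre u v post. length pre + 2 + length post = n \<Longrightarrow>
      M (pre @ u # v # post) = M (pre @ v # u # post)"
  shows "mset xs = mset ys \<Longrightarrow> length pre + length xs = n \<Longrightarrow> M (pre @ xs) = M (pre @ ys)"
proof (induction xs arbitrary: ys pre)
  case Nil then show ?case by simp
next
  case (Cons x xs)
  then obtain ys1 ys2 where ys: "ys = ys1 @ x # ys2"
    by (metis list.set_intros(1) set_mset_mset split_list)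
  then have ms: "mset xs = mset (ys1 @ ys2)" using Cons.prems(1) by simp
  then have len: "length xs = length ys1 + length ys2" by (metis length_append size_mset)
  have "M (pre @ x # xs) = M ((pre @ [x]) @ ys1 @ ys2)"
    using Cons.IH[OF ms, of "pre @ [x]"] Cons.prems(2) by simp
  also have "\<dots> = M (pre @ ys1 @ x # ys2)"
    using adjacent_swap_invariant_move[of n M, OF swap, where pre=pre and x=x and ys=ys1 and zs=ys2] Cons.prems(2) len by simp
  finally show ?case using ys by simp
qed

lemma hderiv_mset:
  fixes f :: "'v::real_normed_vector \<Rightarrow> 'w::real_normed_vector"
  assumes f: "differentiable_upto (n + 1) f S" and dense: "S \<subseteq> closure (interior S)"
    and p: "p \<in> S" and xs: "mset xs = mset ys" "length xs = n"
  shows "hderiv S n f p xs = hderiv S n f p ys"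
proof -
  have "hderiv S n f p (pre @ u # v # post) = hderiv S n f p (pre @ v # u # post)"
    if "length pre + 2 + length post = n" for pre u v post
  proof -
    have "n + 1 = length pre + 3 + length post" using that by simp
    from hderiv_swap[OF f[unfolded this] dense p] that show ?thesis by (simp del: hderiv.simps)
  qed
  from adjacent_swap_invariant_mset[of n "hderiv S n f p", OF this xs(1), of "[]"] xs(2)
  show ?thesis by simp
qed

section \<open>Leibniz rule and derivatives of powers of the vertical coordinate\<close>

fun splits :: "'a list \<Rightarrow> ('a list \<times> 'a list) list" where
  "splits [] = [([], [])]"
| "splits (u # hs) = map (\<lambda>x. (u # fst x, snd x)) (splits hs) @ map (\<lambda>x. (fst x, u # snd x)) (splits hs)"

lemma length_splits_mem: "x \<in> set (splits hs) \<Longrightarrow> length (fst x) + length (snd x) = length hs"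
  by (induction hs arbitrary: x) auto

lemma prod_list_splits_mem:
  fixes f :: "'a \<Rightarrow> 'b::comm_monoid_mult"
  shows "x \<in> set (splits hs) \<Longrightarrow> prod_list (map f (fst x)) * prod_list (map f (snd x)) = prod_list (map f hs)"
  by (induction hs arbitrary: x) (auto simp: algebra_simps)

lemma length_splits: "length (splits hs) = 2 ^ length hs"
  by (induction hs) auto

lemma has_derivative_sum_list:
  assumes "\<And>x. x \<in> set L \<Longrightarrow> (F x has_derivative F' x) net"
  shows "((\<lambda>q. \<Sum>x\<leftarrow>L. F x q) has_derivative (\<lambda>h. \<Sum>x\<leftarrow>L. F' x h)) net"
  using assms by (induction L) (auto intro: has_derivative_add)

lemma hderiv_scaleR_leibniz:
  fixes a :: "'v::real_normed_vector \<Rightarrow> real" and f :: "'v \<Rightarrow> 'w::real_normed_vector"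
  assumes S: "cone_condition S" and a: "differentiable_upto n a S" and f: "differentiable_upto n f S"
  shows "length hs \<le> n \<Longrightarrow> p \<in> S \<Longrightarrow>
    hderiv S (length hs) (\<lambda>q. a q *\<^sub>R f q) p hs =
      (\<Sum>x\<leftarrow>splits hs. hderiv S (length (fst x)) a p (fst x) *\<^sub>R hderiv S (length (snd x)) f p (snd x))"
proof (induction hs arbitrary: p)
  case Nil then show ?case by simp
next
  case (Cons u hs)
  let ?A = "\<lambda>x q. hderiv S (length (fst x)) a q (fst x)"
  let ?F = "\<lambda>x q. hderiv S (length (snd x)) f q (snd x)"
  let ?dA = "\<lambda>x. frechet_derivative (?A x) (at p within S)"
  let ?dF = "\<lambda>x. frechet_derivative (?F x) (at p within S)"
  have IH: "\<forall>q\<in>S. hderiv S (length hs) (\<lambda>q. a q *\<^sub>R f q) q hs = (\<Sum>x\<leftarrow>splits hs. ?A x q *\<^sub>R ?F x q)"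
    using Cons.IH Cons.prems by simp
  have "hderiv S (length (u # hs)) (\<lambda>q. a q *\<^sub>R f q) p (u # hs) =
      frechet_derivative (\<lambda>q. \<Sum>x\<leftarrow>splits hs. ?A x q *\<^sub>R ?F x q) (at p within S) u"
    using frechet_derivative_cong_within[OF IH Cons.prems(2)] by simp
  also have "\<dots> = (\<Sum>x\<leftarrow>splits hs. ?A x p *\<^sub>R ?dF x u + ?dA x u *\<^sub>R ?F x p)"
  proof -
    have "((\<lambda>q. \<Sum>x\<leftarrow>splits hs. ?A x q *\<^sub>R ?F x q) has_derivative
        (\<lambda>h. \<Sum>x\<leftarrow>splits hs. ?A x p *\<^sub>R ?dF x h + ?dA x h *\<^sub>R ?F x p)) (at p within S)"
    proof (rule has_derivative_sum_list, rule has_derivative_scaleR)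
      fix x assume x: "x \<in> set (splits hs)"
      then have "length (fst x) < n" "length (snd x) < n"
        using length_splits_mem[OF x] Cons.prems(1) by auto
      then show "(?A x has_derivative ?dA x) (at p within S)" "(?F x has_derivative ?dF x) (at p within S)"
        using has_derivative_hderiv[OF a _ refl Cons.prems(2)] has_derivative_hderiv[OF f _ refl Cons.prems(2)]
        by auto
    qed
    then show ?thesis by (simp add: frechet_derivative_cone[OF S Cons.prems(2)])
  qed
  also have "\<dots> = (\<Sum>x\<leftarrow>splits (u # hs). hderiv S (length (fst x)) a p (fst x) *\<^sub>R hderiv S (length (snd x)) f p (snd x))"
    by (simp add: sum_list_addf add.commute o_def)
  finally show ?case .
qed

lemma differentiable_upto_scaleR:
  fixes a :: "'v::real_normed_vector \<Rightarrow> real" and f :: "'v \<Rightarrow> 'w::real_normed_vector"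
  assumes S: "cone_condition S" and a: "differentiable_upto n a S" and f: "differentiable_upto n f S"
  shows "differentiable_upto n (\<lambda>q. a q *\<^sub>R f q) S"
  unfolding differentiable_upto_def
proof (intro allI impI ballI)
  fix j and hs :: "'v list" and p
  assume j: "j < n" and l: "length hs = j" and p: "p \<in> S"
  let ?A = "\<lambda>x q. hderiv S (length (fst x)) a q (fst x)"
  let ?F = "\<lambda>x q. hderiv S (length (snd x)) f q (snd x)"
  have eq: "\<forall>q\<in>S. hderiv S j (\<lambda>q. a q *\<^sub>R f q) q hs = (\<Sum>x\<leftarrow>splits hs. ?A x q *\<^sub>R ?F x q)"
    using hderiv_scaleR_leibniz[OF S a f] j l by auto
  have "((\<lambda>q. \<Sum>x\<leftarrow>splits hs. ?A x q *\<^sub>R ?F x q) has_derivative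
      (\<lambda>h. \<Sum>x\<leftarrow>splits hs. ?A x p *\<^sub>R frechet_derivative (?F x) (at p within S) h
                           + frechet_derivative (?A x) (at p within S) h *\<^sub>R ?F x p)) (at p within S)"
  proof (rule has_derivative_sum_list, rule has_derivative_scaleR)
    fix x assume x: "x \<in> set (splits hs)"
    then have "length (fst x) < n" "length (snd x) < n" using length_splits_mem[OF x] j l by auto
    then show "(?A x has_derivative frechet_derivative (?A x) (at p within S)) (at p within S)"
      "(?F x has_derivative frechet_derivative (?F x) (at p within S)) (at p within S)"
      using has_derivative_hderiv[OF a _ refl p] has_derivative_hderiv[OF f _ refl p] by auto
  qed
  then show "(\<lambda>q. hderiv S j (\<lambda>q. a q *\<^sub>R f q) q hs) differentiable (at p within S)"
    using differentiable_cong_within[OF eq p] by (auto simp: differentiable_def)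
qed

lemma hderiv_const_add:
  fixes f :: "'v::real_normed_vector \<Rightarrow> 'w::real_normed_vector"
  assumes S: "cone_condition S"
  shows "differentiable_upto (Suc j) f S \<Longrightarrow> p \<in> S \<Longrightarrow>
    hderiv S (Suc j) (\<lambda>q. c + f q) p hs = hderiv S (Suc j) f p hs"
proof (induction j arbitrary: p hs)
  case 0
  have "(f has_derivative frechet_derivative f (at p within S)) (at p within S)"
    using has_derivative_hderiv[OF 0(1), of 0 "[]" p] 0(2) by simp
  then have "((\<lambda>q. c + f q) has_derivative frechet_derivative f (at p within S)) (at p within S)"
    by (auto intro: derivative_eq_intros)
  from frechet_derivative_cone[OF S 0(2) this] show ?case by simp
next
  case (Suc j)
  have "\<forall>q\<in>S. hderiv S (Suc j) (\<lambda>q. c + f q) q (tl hs) = hderiv S (Suc j) f q (tl hs)"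
    using Suc.IH Suc.prems(1) differentiable_upto_mono by (metis le_SucI order_refl)
  from frechet_derivative_cong_within[OF this Suc.prems(2)] show ?case
    by (simp only: hderiv.simps(2)[of S "Suc j" _ p hs])
qed

lemma differentiable_upto_const_add:
  fixes f :: "'v::real_normed_vector \<Rightarrow> 'w::real_normed_vector"
  assumes S: "cone_condition S" and f: "differentiable_upto n f S"
  shows "differentiable_upto n (\<lambda>q. c + f q) S"
  unfolding differentiable_upto_def
proof (intro allI impI ballI)
  fix j and hs :: "'v list" and p
  assume j: "j < n" and l: "length hs = j" and p: "p \<in> S"
  show "(\<lambda>q. hderiv S j (\<lambda>q. c + f q) q hs) differentiable (at p within S)"
  proof (cases j)
    case 0
    then show ?thesis using differentiable_uptoD[OF f j, of "[]" p] l p by simp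
  next
    case (Suc j')
    have f': "differentiable_upto (Suc j') f S" using differentiable_upto_mono[OF f] j Suc by simp
    have "\<forall>q\<in>S. hderiv S (Suc j') (\<lambda>q. c + f q) q hs = hderiv S (Suc j') f q hs"
      using hderiv_const_add[OF S f'] by (intro ballI)
    from iffD2[OF differentiable_cong_within[OF this p]] show ?thesis
      using differentiable_uptoD[OF f j l p] Suc by (simp del: hderiv.simps)
  qed
qed

lemma hderiv_Pair:
  fixes f :: "'v::real_normed_vector \<Rightarrow> 'w::real_normed_vector" and g :: "'v \<Rightarrow> 'u::real_normed_vector"
  assumes S: "cone_condition S"
  shows "differentiable_upto j f S \<Longrightarrow> differentiable_upto j g S \<Longrightarrow> length hs = j \<Longrightarrow> p \<in> S \<Longrightarrow>
     hderiv S j (\<lambda>q. (f q, g q)) p hs = (hderiv S j f p hs, hderiv S j g p hs)"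
proof (induction j arbitrary: p hs)
  case 0 then show ?case by simp
next
  case (Suc j)
  let ?f = "\<lambda>q. hderiv S j f q (tl hs)" and ?g = "\<lambda>q. hderiv S j g q (tl hs)"
  have "differentiable_upto j f S" "differentiable_upto j g S" "length (tl hs) = j"
    using Suc.prems differentiable_upto_mono by fastforce+
  then have "\<forall>q\<in>S. hderiv S j (\<lambda>q. (f q, g q)) q (tl hs) = (?f q, ?g q)"
    using Suc.IH by blast
  then have "frechet_derivative (\<lambda>q. hderiv S j (\<lambda>q. (f q, g q)) q (tl hs)) (at p within S) =
      frechet_derivative (\<lambda>q. (?f q, ?g q)) (at p within S)"
    by (rule frechet_derivative_cong_within[OF _ Suc.prems(4)])
  also have "\<dots> = (\<lambda>h. (frechet_derivative ?f (at p within S) h, frechet_derivative ?g (at p within S) h))"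
    using has_derivative_hderiv[OF Suc.prems(1) _ _ Suc.prems(4), of j "tl hs"]
      has_derivative_hderiv[OF Suc.prems(2) _ _ Suc.prems(4), of j "tl hs"] Suc.prems(3)
    by (intro frechet_derivative_cone[OF S Suc.prems(4)] has_derivative_Pair) auto
  finally show ?case by (simp only: hderiv.simps(2))
qed

definition falling_factorial :: "real \<Rightarrow> nat \<Rightarrow> real" where
  "falling_factorial \<beta> n = (\<Prod>i<n. \<beta> - real i)"

lemma has_derivative_snd_powr:
  assumes pos: "\<sigma> * snd q > 0"
  shows "((\<lambda>q::'a::real_normed_vector \<times> real. (\<sigma> * snd q) powr \<beta>) has_derivative
           (\<lambda>h. \<beta> * (\<sigma> * snd q) powr (\<beta> - 1) * (\<sigma> * snd h))) (at q within S)"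
proof -
  have inner: "((\<lambda>q::'a \<times> real. \<sigma> * snd q) has_derivative (\<lambda>h. \<sigma> * snd h)) (at q within S)"
    by (auto intro!: derivative_eq_intros)
  have "((\<lambda>z. z powr \<beta>) has_derivative (*) (\<beta> * (\<sigma> * snd q) powr (\<beta> - 1))) (at (\<sigma> * snd q))"
    using has_real_derivative_powr[OF pos, of \<beta>] by (simp add: has_field_derivative_def)
  from has_derivative_in_compose[OF inner has_derivative_at_withinI[OF this]]
  show ?thesis by (simp add: mult.assoc)
qed

lemma hderiv_snd_powr:
  assumes S: "cone_condition S" and pos: "\<forall>q\<in>S. \<sigma> * snd q > 0" and q: "q \<in> S"
  shows "hderiv S (length hs) (\<lambda>q. (\<sigma> * snd q) powr \<beta>) q hs =
      falling_factorial \<beta> (length hs) * (\<Prod>h\<leftarrow>hs. \<sigma> * snd h) * (\<sigma> * snd q) powr (\<beta> - real (length hs))"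
  using q
proof (induction hs arbitrary: q)
  case Nil then show ?case by (simp add: falling_factorial_def)
next
  case (Cons u hs)
  let ?c = "falling_factorial \<beta> (length hs) * (\<Prod>h\<leftarrow>hs. \<sigma> * snd h)"
  let ?\<beta> = "\<beta> - real (length hs)"
  have "\<forall>q\<in>S. hderiv S (length hs) (\<lambda>q. (\<sigma> * snd q) powr \<beta>) q hs = ?c * (\<sigma> * snd q) powr ?\<beta>"
    using Cons.IH by blast
  from frechet_derivative_cong_within[OF this Cons.prems]
  have "hderiv S (length (u # hs)) (\<lambda>q. (\<sigma> * snd q) powr \<beta>) q (u # hs) =
      frechet_derivative (\<lambda>q. ?c * (\<sigma> * snd q) powr ?\<beta>) (at q within S) u"
    by simp
  also have "\<dots> = ?c * (?\<beta> * (\<sigma> * snd q) powr (?\<beta> - 1) * (\<sigma> * snd u))"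
    using has_derivative_mult_right[OF has_derivative_snd_powr[OF pos[rule_format, OF Cons.prems],
        of ?\<beta> S], of ?c]
    by (simp add: frechet_derivative_cone[OF S Cons.prems])
  also have "\<dots> = falling_factorial \<beta> (length (u # hs)) * (\<Prod>h\<leftarrow>u # hs. \<sigma> * snd h) *
      (\<sigma> * snd q) powr (\<beta> - real (length (u # hs)))"
    by (simp add: falling_factorial_def algebra_simps diff_diff_add)
  finally show ?case .
qed

lemma differentiable_upto_snd_powr:
  fixes S :: "('a::real_normed_vector \<times> real) set"
  assumes S: "cone_condition S" and pos: "\<forall>q\<in>S. \<sigma> * snd q > 0"
  shows "differentiable_upto n (\<lambda>q. (\<sigma> * snd q) powr \<beta>) S"
  unfolding differentiable_upto_def
proof (intro allI impI ballI)
  fix j and hs :: "('a \<times> real) list" and p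
  assume "j < n" and l: "length hs = j" and p: "p \<in> S"
  let ?c = "falling_factorial \<beta> j * (\<Prod>h\<leftarrow>hs. \<sigma> * snd h)"
  have eq: "\<forall>q\<in>S. hderiv S j (\<lambda>q. (\<sigma> * snd q) powr \<beta>) q hs = ?c * (\<sigma> * snd q) powr (\<beta> - real j)"
    using hderiv_snd_powr[OF S pos] l by blast
  have "((\<lambda>q. ?c * (\<sigma> * snd q) powr (\<beta> - real j)) has_derivative
       (\<lambda>h. ?c * ((\<beta> - real j) * (\<sigma> * snd p) powr (\<beta> - real j - 1) * (\<sigma> * snd h)))) (at p within S)"
    using pos p by (intro has_derivative_mult_right has_derivative_snd_powr) auto
  from iffD2[OF differentiable_cong_within[OF eq p] differentiableI[OF this]]
  show "(\<lambda>q. hderiv S j (\<lambda>q. (\<sigma> * snd q) powr \<beta>) q hs) differentiable (at p within S)" .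
qed

lemma is_norm_nonneg: "is_norm N \<Longrightarrow> 0 \<le> N x"
  unfolding is_norm_def by blast

lemma is_norm_scale: "is_norm N \<Longrightarrow> N (c *\<^sub>R x) = \<bar>c\<bar> * N x"
  unfolding is_norm_def by blast

lemma is_norm_zero: "is_norm N \<Longrightarrow> N 0 = 0"
  using is_norm_scale[of N 0 0] by simp

lemma is_norm_triangle: "is_norm N \<Longrightarrow> N (x + y) \<le> N x + N y"
  unfolding is_norm_def by blast

lemma is_norm_abs: "is_norm (abs :: real \<Rightarrow> real)"
  unfolding is_norm_def by (auto simp: abs_mult abs_triangle_ineq)

lemma is_norm_sum:
  assumes N: "is_norm N" and A: "finite A"
  shows "N (\<Sum>i\<in>A. f i) \<le> (\<Sum>i\<in>A. N (f i))"
  using A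
proof (induction A rule: finite_induct)
  case empty then show ?case using is_norm_zero[OF N] by simp
next
  case (insert x A)
  then show ?case using is_norm_triangle[OF N, of "f x" "sum f A"] by simp
qed

lemma is_norm_sum_list:
  assumes "is_norm N"
  shows "N (\<Sum>x\<leftarrow>xs. f x) \<le> (\<Sum>x\<leftarrow>xs. N (f x))"
proof (induction xs)
  case Nil then show ?case using is_norm_zero[OF assms] by simp
next
  case (Cons a xs)
  then show ?case using is_norm_triangle[OF assms, of "f a" "\<Sum>x\<leftarrow>xs. f x"] by simp
qed

lemma is_norm_le_norm:
  fixes N :: "'a::euclidean_space \<Rightarrow> real"
  assumes N: "is_norm N"
  shows "N x \<le> (\<Sum>b\<in>Basis. N b) * norm x"
proof -
  have "N x = N (\<Sum>b\<in>Basis. (x \<bullet> b) *\<^sub>R b)" by (simp add: euclidean_representation)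
  also have "\<dots> \<le> (\<Sum>b\<in>Basis. N ((x \<bullet> b) *\<^sub>R b))"
    by (rule is_norm_sum[OF N finite_Basis])
  also have "\<dots> \<le> (\<Sum>b\<in>Basis. norm x * N b)"
    by (intro sum_mono) (simp add: is_norm_scale[OF N] mult_right_mono Basis_le_norm is_norm_nonneg[OF N])
  finally show ?thesis by (simp add: sum_distrib_left mult.commute)
qed

lemma prod_norm_nonneg: "is_norm N \<Longrightarrow> 0 \<le> prod_norm N e"
  unfolding prod_norm_def using is_norm_nonneg by (metis abs_ge_zero max.coboundedI2)

lemma prod_list_prod_norm_nonneg: "is_norm N \<Longrightarrow> 0 \<le> (\<Prod>e\<leftarrow>es. prod_norm N e)"
  by (induction es) (auto simp: prod_norm_nonneg)

definition pure_direction :: "('a::real_vector \<times> real) \<Rightarrow> bool" where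
  "pure_direction e \<longleftrightarrow> snd e = 0 \<or> e = (0, 1)"

lemma multilinear_bound_from_pure_directions:
  fixes M :: "('a::real_vector \<times> real) list \<Rightarrow> 'w::real_vector"
  assumes lin: "\<And>pre post a b c. length pre + 1 + length post = n \<Longrightarrow>
      M (pre @ (a + c *\<^sub>R b) # post) = M (pre @ a # post) + c *\<^sub>R M (pre @ b # post)"
    and nrm: "is_norm nrm" and N: "is_norm N" and B: "B \<ge> 0"
    and pure: "\<And>xs. length xs = n \<Longrightarrow> \<forall>e\<in>set xs. pure_direction e \<Longrightarrow>
        nrm (M xs) \<le> B * (\<Prod>e\<leftarrow>xs. prod_norm N e)"
    and xs: "length xs = n"
  shows "nrm (M xs) \<le> 2 ^ n * B * (\<Prod>e\<leftarrow>xs. prod_norm N e)"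
proof -
  have "length pre + length ys = n \<Longrightarrow> \<forall>e\<in>set ys. pure_direction e \<Longrightarrow>
      nrm (M (pre @ ys)) \<le> 2 ^ length pre * B * (\<Prod>e\<leftarrow>pre @ ys. prod_norm N e)" for pre ys
  proof (induction pre arbitrary: ys rule: rev_induct)
    case Nil then show ?case using pure[of ys] by simp
  next
    case (snoc e pre)
    obtain h t where "e = (h, t)" by (cases e)
    then have e: "e = (h, 0) + t *\<^sub>R (0, 1)" by simp
    let ?P = "\<lambda>xs. \<Prod>e\<leftarrow>xs. prod_norm N e"
    let ?K = "2 ^ length pre * B * (?P pre * ?P ys)"
    have K: "?K \<ge> 0" using B by (intro mult_nonneg_nonneg prod_list_prod_norm_nonneg[OF N]) auto
    have "M (pre @ e # ys) = M (pre @ (h, 0) # ys) + t *\<^sub>R M (pre @ (0, 1) # ys)"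
      unfolding e using snoc.prems(1) by (intro lin) simp
    then have "nrm (M (pre @ e # ys)) \<le> nrm (M (pre @ (h, 0) # ys)) + \<bar>t\<bar> * nrm (M (pre @ (0, 1) # ys))"
      using is_norm_triangle[OF nrm] is_norm_scale[OF nrm] by metis
    also have "\<dots> \<le> ?K * N h + \<bar>t\<bar> * ?K"
      using snoc.IH[of "(h, 0) # ys"] snoc.IH[of "(0, 1) # ys"] snoc.prems
      by (intro add_mono mult_left_mono)
         (auto simp: pure_direction_def prod_norm_def is_norm_nonneg[OF N] is_norm_zero[OF N] ac_simps)
    also have "\<dots> = ?K * (N h + \<bar>t\<bar>)" by (simp add: algebra_simps)
    also have "\<dots> \<le> ?K * (2 * prod_norm N e)"
      using K by (intro mult_left_mono) (auto simp: e prod_norm_def)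
    finally show ?case by (simp add: ac_simps)
  qed
  from this[of xs "[]"] xs show ?thesis by simp
qed

section \<open>The two halves of the punctured cylinder\<close>

lemma convex_half_strip:
  fixes N :: "'a::real_vector \<Rightarrow> real" and \<sigma> :: real
  assumes N: "is_norm N"
  shows "convex {p. N (fst p) \<le> 1 \<and> \<bar>snd p\<bar> \<le> 1 \<and> 0 < \<sigma> * snd p}"
proof (rule convexI)
  fix p q :: "'a \<times> real" and u v :: real
  assume "p \<in> {p. N (fst p) \<le> 1 \<and> \<bar>snd p\<bar> \<le> 1 \<and> 0 < \<sigma> * snd p}"
    and "q \<in> {p. N (fst p) \<le> 1 \<and> \<bar>snd p\<bar> \<le> 1 \<and> 0 < \<sigma> * snd p}"
  then have pq: "N (fst p) \<le> 1" "\<bar>snd p\<bar> \<le> 1" "0 < \<sigma> * snd p"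
    "N (fst q) \<le> 1" "\<bar>snd q\<bar> \<le> 1" "0 < \<sigma> * snd q" by auto
  assume uv: "0 \<le> u" "0 \<le> v" "u + v = 1"
  have "N (u *\<^sub>R fst p + v *\<^sub>R fst q) \<le> u * N (fst p) + v * N (fst q)"
    using is_norm_triangle[OF N] is_norm_scale[OF N] uv by (metis abs_of_nonneg)
  also have "\<dots> \<le> u * 1 + v * 1" using pq uv by (intro add_mono mult_left_mono) auto
  finally have 1: "N (fst (u *\<^sub>R p + v *\<^sub>R q)) \<le> 1" using uv by simp
  have "\<bar>u * snd p + v * snd q\<bar> \<le> u * \<bar>snd p\<bar> + v * \<bar>snd q\<bar>"
    using uv abs_triangle_ineq[of "u * snd p" "v * snd q"] by (simp add: abs_mult)
  also have "\<dots> \<le> u * 1 + v * 1" using pq uv by (intro add_mono mult_left_mono) auto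
  finally have 2: "\<bar>snd (u *\<^sub>R p + v *\<^sub>R q)\<bar> \<le> 1" using uv by simp
  have "0 < u * (\<sigma> * snd p) + v * (\<sigma> * snd q)"
    using uv pq by (cases "u = 0") (auto intro: add_pos_nonneg)
  then have 3: "0 < \<sigma> * snd (u *\<^sub>R p + v *\<^sub>R q)" by (simp add: algebra_simps)
  from 1 2 3 show "u *\<^sub>R p + v *\<^sub>R q \<in> {p. N (fst p) \<le> 1 \<and> \<bar>snd p\<bar> \<le> 1 \<and> 0 < \<sigma> * snd p}"
    by simp
qed

lemma interior_half_strip:
  fixes N :: "'a::euclidean_space \<Rightarrow> real" and \<sigma> :: real
  assumes N: "is_norm N" and \<sigma>: "\<bar>\<sigma>\<bar> = 1"
  shows "(0, \<sigma> / 2) \<in> interior {p. N (fst p) \<le> 1 \<and> \<bar>snd p\<bar> \<le> 1 \<and> 0 < \<sigma> * snd p}"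
proof -
  define C where "C = (\<Sum>b\<in>Basis. N b) + 1"
  have C: "C > 0" unfolding C_def by (intro add_nonneg_pos sum_nonneg is_norm_nonneg[OF N]) auto
  define r where "r = min (1 / 2) (1 / C)"
  have r: "r > 0" using C by (simp add: r_def)
  have "N x \<le> 1 \<and> \<bar>y\<bar> \<le> 1 \<and> 0 < \<sigma> * y" if "dist (0, \<sigma> / 2) (x, y) < r" for x :: 'a and y
  proof -
    have x: "norm x < r" and y: "\<bar>y - \<sigma> / 2\<bar> < r"
      using that dist_fst_le[of "(0, \<sigma> / 2)" "(x, y)"] dist_snd_le[of "(0, \<sigma> / 2)" "(x, y)"]
      by (auto simp: dist_real_def dist_norm abs_minus_commute)
    have "N x \<le> C * norm x"
      using is_norm_le_norm[OF N, of x] norm_ge_zero[of x] unfolding C_def distrib_right by linarith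
    also have "\<dots> \<le> C * (1 / C)" using x C by (intro mult_left_mono) (auto simp: r_def)
    finally have "N x \<le> 1" using C by simp
    moreover have "\<bar>\<sigma> * (y - \<sigma> / 2)\<bar> < 1 / 2" "\<bar>y - \<sigma> / 2\<bar> < 1 / 2"
      using y \<sigma> by (auto simp: abs_mult r_def)
    then have "\<bar>y\<bar> \<le> 1 \<and> 0 < \<sigma> * y"
      using \<sigma> by (auto simp: algebra_simps abs_less_iff power2_eq_square abs_if split: if_splits)
    ultimately show ?thesis by simp
  qed
  then have "ball (0, \<sigma> / 2) r \<subseteq> {p. N (fst p) \<le> 1 \<and> \<bar>snd p\<bar> \<le> 1 \<and> 0 < \<sigma> * snd p}"
    by auto
  then show ?thesis using r by (meson centre_in_ball interior_maximal open_ball subsetD)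
qed

lemma half_region_regular:
  fixes N :: "'a::euclidean_space \<Rightarrow> real"
  assumes N: "is_norm N" and V: "open V" and \<sigma>: "\<bar>\<sigma>\<bar> = 1"
  shows "cone_condition (V \<inter> DDstar N \<inter> {p. 0 < \<sigma> * snd p})"
    and "V \<inter> DDstar N \<inter> {p. 0 < \<sigma> * snd p} \<subseteq> closure (interior (V \<inter> DDstar N \<inter> {p. 0 < \<sigma> * snd p}))"
proof -
  let ?C = "{p. N (fst p) \<le> 1 \<and> \<bar>snd p\<bar> \<le> 1 \<and> 0 < \<sigma> * snd p}"
  have eq: "V \<inter> DDstar N \<inter> {p. 0 < \<sigma> * snd p} = V \<inter> ?C"
    by (auto simp: DDstar_def DD_def DD0_def)
  have C: "convex ?C" "(0, \<sigma> / 2) \<in> interior ?C"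
    using convex_half_strip[OF N] interior_half_strip[OF N \<sigma>] by auto
  show "cone_condition (V \<inter> DDstar N \<inter> {p. 0 < \<sigma> * snd p})"
    unfolding eq by (rule cone_condition_Int_open[OF cone_condition_convex[OF C] V])
  have "interior ?C \<noteq> {}" using C(2) by blast
  then have "?C \<subseteq> closure (interior ?C)"
    by (simp add: convex_closure_interior[OF C(1)] closure_subset)
  then show "V \<inter> DDstar N \<inter> {p. 0 < \<sigma> * snd p} \<subseteq> closure (interior (V \<inter> DDstar N \<inter> {p. 0 < \<sigma> * snd p}))"
    unfolding eq by (rule dense_interior_Int_open[OF _ V])
qed

section \<open>Derivative estimates\<close>

text \<open>The estimate of condition (L1) on a set \<open>S\<close>, for \<open>l\<close> horizontal directions
  \<open>(h, 0)\<close> followed by \<open>m\<close> copies of the vertical direction \<open>(0, 1)\<close>.\<close>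

definition mixed_derivative_bound ::
    "('w::real_normed_vector \<Rightarrow> real) \<Rightarrow> ('a::real_normed_vector \<Rightarrow> real) \<Rightarrow> ('a \<times> real) set \<Rightarrow>
     nat \<Rightarrow> real \<Rightarrow> real \<Rightarrow> ('a \<times> real \<Rightarrow> 'w) \<Rightarrow> bool" where
  "mixed_derivative_bound nrm N S n K \<gamma> \<phi> \<longleftrightarrow>
     (\<forall>l m hs x y. l + m \<le> n \<longrightarrow> length hs = l \<longrightarrow> (x, y) \<in> S \<longrightarrow>
        nrm (hderiv S (l + m) \<phi> (x, y) (map (\<lambda>h. (h, 0)) hs @ replicate m (0, 1)))
          \<le> K * \<bar>y\<bar> powr (\<gamma> - real m) * (\<Prod>h\<leftarrow>hs. N h))"

lemma hderiv_bound_pure_directions: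
  fixes \<phi> :: "'a::real_normed_vector \<times> real \<Rightarrow> 'w::real_normed_vector"
  assumes N: "is_norm N" and dense: "S \<subseteq> closure (interior S)"
    and y: "\<forall>q\<in>S. snd q \<noteq> 0 \<and> \<bar>snd q\<bar> \<le> 1"
    and \<phi>: "differentiable_upto (k + 1) \<phi> S" and bound: "mixed_derivative_bound nrm N S (k + 1) K \<gamma> \<phi>"
    and K: "K \<ge> 0" and \<gamma>: "\<gamma> \<ge> 0"
    and p: "p \<in> S" and xs: "length xs = j" "j \<le> k" "\<forall>e\<in>set xs. pure_direction e"
  shows "nrm (hderiv S j \<phi> p xs) \<le> K * \<bar>snd p\<bar> powr (- real j) * (\<Prod>e\<leftarrow>xs. prod_norm N e)"
proof -
  let ?H = "filter (\<lambda>e. snd e = 0) xs" and ?V = "filter (\<lambda>e. snd e \<noteq> 0) xs"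
  have V: "?V = replicate (length ?V) (0, 1)"
    using xs(3) by (induction xs) (auto simp: pure_direction_def)
  have H: "?H = map (\<lambda>h. (h, 0)) (map fst ?H)" by (induction xs) auto
  have len: "length (map fst ?H) + length ?V = j"
    using xs(1) sum_length_filter_compl[of "\<lambda>e. snd e = 0" xs] by simp
  have \<phi>': "differentiable_upto (j + 1) \<phi> S" using differentiable_upto_mono[OF \<phi>] xs(2) by simp
  have "mset xs = mset (?H @ ?V)" by (simp add: multiset_partition)
  then have "hderiv S j \<phi> p xs = hderiv S j \<phi> p (?H @ ?V)"
    by (rule hderiv_mset[OF \<phi>' dense p _ xs(1)])
  also have "\<dots> = hderiv S (length (map fst ?H) + length ?V) \<phi> (fst p, snd p)
      (map (\<lambda>h. (h, 0)) (map fst ?H) @ replicate (length ?V) (0, 1))"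
    using len H V by (metis prod.collapse)
  finally have "nrm (hderiv S j \<phi> p xs) \<le>
      K * \<bar>snd p\<bar> powr (\<gamma> - real (length ?V)) * (\<Prod>h\<leftarrow>map fst ?H. N h)"
    using bound[unfolded mixed_derivative_bound_def, rule_format,
        of "length (map fst ?H)" "length ?V" "map fst ?H" "fst p" "snd p"] p len xs(2)
    by simp
  also have "\<dots> \<le> K * \<bar>snd p\<bar> powr (- real j) * (\<Prod>h\<leftarrow>map fst ?H. N h)"
    using y p len \<gamma> K
    by (intro mult_right_mono mult_left_mono powr_mono' prod_list_nonneg) (auto simp: is_norm_nonneg[OF N])
  also have "(\<Prod>h\<leftarrow>map fst ?H. N h) = (\<Prod>e\<leftarrow>xs. prod_norm N e)"
    using xs(3) by (induction xs) (auto simp: pure_direction_def prod_norm_def is_norm_nonneg[OF N] is_norm_zero[OF N])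
  finally show ?thesis .
qed

lemma hderiv_bound_all_directions:
  fixes \<phi> :: "'a::real_normed_vector \<times> real \<Rightarrow> 'w::real_normed_vector"
  assumes N: "is_norm N" and nrm: "is_norm nrm"
    and S: "cone_condition S" and dense: "S \<subseteq> closure (interior S)"
    and y: "\<forall>q\<in>S. snd q \<noteq> 0 \<and> \<bar>snd q\<bar> \<le> 1"
    and \<phi>: "differentiable_upto (k + 1) \<phi> S" and bound: "mixed_derivative_bound nrm N S (k + 1) K \<gamma> \<phi>"
    and K: "K \<ge> 0" and \<gamma>: "\<gamma> \<ge> 0"
    and p: "p \<in> S" and hs: "length hs = j" "j \<le> k"
  shows "nrm (hderiv S j \<phi> p hs) \<le> 2 ^ j * K * \<bar>snd p\<bar> powr (- real j) * (\<Prod>e\<leftarrow>hs. prod_norm N e)"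
proof -
  have \<phi>': "differentiable_upto j \<phi> S" using differentiable_upto_mono[OF \<phi>] hs(2) by simp
  have "nrm (hderiv S j \<phi> p hs) \<le> 2 ^ j * (K * \<bar>snd p\<bar> powr (- real j)) * (\<Prod>e\<leftarrow>hs. prod_norm N e)"
  proof (rule multilinear_bound_from_pure_directions[OF _ nrm N _ _ hs(1)])
    show "hderiv S j \<phi> p (pre @ (a + c *\<^sub>R b) # post) =
        hderiv S j \<phi> p (pre @ a # post) + c *\<^sub>R hderiv S j \<phi> p (pre @ b # post)"
      if "length pre + 1 + length post = j" for pre post a b c
      by (rule hderiv_linear_slot[OF S \<phi>' that p])
    show "nrm (hderiv S j \<phi> p xs) \<le> K * \<bar>snd p\<bar> powr (- real j) * (\<Prod>e\<leftarrow>xs. prod_norm N e)"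
      if "length xs = j" "\<forall>e\<in>set xs. pure_direction e" for xs
      using hderiv_bound_pure_directions[OF N dense y \<phi> bound K \<gamma> p that(1) hs(2) that(2)] .
  qed (use K in simp)
  then show ?thesis by (simp add: mult.assoc)
qed

lemma abs_hderiv_snd_powr_le:
  fixes S :: "('a::real_normed_vector \<times> real) set"
  assumes S: "cone_condition S" and pos: "\<forall>q\<in>S. \<sigma> * snd q > 0" and \<sigma>: "\<bar>\<sigma>\<bar> = 1" and p: "p \<in> S"
  shows "\<bar>hderiv S (length hs) (\<lambda>q. (\<sigma> * snd q) powr \<beta>) p hs\<bar> \<le>
    \<bar>falling_factorial \<beta> (length hs)\<bar> * \<bar>snd p\<bar> powr (\<beta> - real (length hs)) * (\<Prod>e\<leftarrow>hs. prod_norm N e)"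
proof -
  have "\<sigma> * snd p = \<bar>snd p\<bar>" using pos p \<sigma> by (auto simp: abs_if split: if_splits)
  moreover have "\<bar>\<Prod>e\<leftarrow>hs. \<sigma> * snd e\<bar> \<le> (\<Prod>e\<leftarrow>hs. prod_norm N e)"
    using \<sigma> by (induction hs) (auto simp: abs_mult prod_norm_def intro!: mult_mono)
  ultimately show ?thesis
    by (auto simp: hderiv_snd_powr[OF S pos p] abs_mult mult_ac intro!: mult_left_mono mult_right_mono)
qed

lemma hderiv_const_add_bound:
  fixes \<phi> :: "'a::real_normed_vector \<times> real \<Rightarrow> 'w::real_normed_vector"
  assumes N: "is_norm N" and nrm: "is_norm nrm"
    and S: "cone_condition S" and dense: "S \<subseteq> closure (interior S)"
    and y: "\<forall>q\<in>S. snd q \<noteq> 0 \<and> \<bar>snd q\<bar> \<le> 1"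
    and \<phi>: "differentiable_upto (k + 1) \<phi> S" and bound: "mixed_derivative_bound nrm N S (k + 1) K \<gamma> \<phi>"
    and K: "K \<ge> 0" and \<gamma>: "\<gamma> \<ge> 0"
    and p: "p \<in> S" and hs: "length hs = j" "j \<le> k"
  shows "nrm (hderiv S j (\<lambda>q. c + \<phi> q) p hs) \<le>
      (nrm c + 2 ^ k * K) * \<bar>snd p\<bar> powr (- real j) * (\<Prod>e\<leftarrow>hs. prod_norm N e)"
proof (cases j)
  case 0
  have "nrm (\<phi> p) \<le> K"
    using hderiv_bound_all_directions[OF N nrm S dense y \<phi> bound K \<gamma> p, of "[]"] y p by simp
  then have "nrm (c + \<phi> p) \<le> nrm c + 2 ^ k * K"
    using is_norm_triangle[OF nrm, of c "\<phi> p"] K by (smt (verit) one_le_power mult_le_cancel_right1)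
  then show ?thesis using 0 hs y p by simp
next
  case (Suc j')
  have "differentiable_upto (Suc j') \<phi> S" using differentiable_upto_mono[OF \<phi>] hs(2) Suc by simp
  then have "hderiv S j (\<lambda>q. c + \<phi> q) p hs = hderiv S j \<phi> p hs"
    unfolding Suc by (rule hderiv_const_add[OF S _ p])
  moreover have "nrm (hderiv S j \<phi> p hs) \<le> 2 ^ j * K * \<bar>snd p\<bar> powr (- real j) * (\<Prod>e\<leftarrow>hs. prod_norm N e)"
    by (rule hderiv_bound_all_directions[OF N nrm S dense y \<phi> bound K \<gamma> p hs])
  moreover have "2 ^ j * K \<le> nrm c + 2 ^ k * K"
    using hs(2) K is_norm_nonneg[OF nrm, of c]
    by (smt (verit) mult_right_mono power_increasing one_le_numeral)
  then have "2 ^ j * K * \<bar>snd p\<bar> powr (- real j) * (\<Prod>e\<leftarrow>hs. prod_norm N e) \<le>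
      (nrm c + 2 ^ k * K) * \<bar>snd p\<bar> powr (- real j) * (\<Prod>e\<leftarrow>hs. prod_norm N e)"
    using prod_list_prod_norm_nonneg[OF N, of hs] by (intro mult_right_mono) auto
  ultimately show ?thesis by simp
qed

lemma hderiv_bound_power_factor:
  fixes \<phi> :: "'a::real_normed_vector \<times> real \<Rightarrow> 'w::real_normed_vector"
  assumes N: "is_norm N" and nrm: "is_norm nrm"
    and S: "cone_condition S" and dense: "S \<subseteq> closure (interior S)"
    and pos: "\<forall>q\<in>S. 0 < \<sigma> * snd q \<and> \<bar>snd q\<bar> \<le> 1" and \<sigma>: "\<bar>\<sigma>\<bar> = 1" and k: "k \<ge> 1"
    and \<phi>: "differentiable_upto (k + 1) \<phi> S" and bound: "mixed_derivative_bound nrm N S (k + 1) K \<gamma> \<phi>"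
    and K: "K \<ge> 0" and \<gamma>: "\<gamma> \<ge> 0"
    and p: "p \<in> S" and hs: "length hs = k"
  shows "nrm (hderiv S k (\<lambda>q. c0 + (\<sigma> * snd q) powr \<alpha> *\<^sub>R (c + \<phi> q)) p hs) \<le>
    2 ^ k * (\<Sum>j\<le>k. \<bar>falling_factorial \<alpha> j\<bar>) * (nrm c + 2 ^ k * K) * \<bar>snd p\<bar> powr (\<alpha> - real k)
      * (\<Prod>e\<leftarrow>hs. prod_norm N e)"
proof -
  let ?P = "\<lambda>q. (\<sigma> * snd q) powr \<alpha>" and ?f = "\<lambda>q. c + \<phi> q"
  let ?A = "\<Sum>j\<le>k. \<bar>falling_factorial \<alpha> j\<bar>" and ?E = "nrm c + 2 ^ k * K"
  let ?\<Pi> = "\<lambda>xs. \<Prod>e\<leftarrow>xs. prod_norm N e"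
  have pos': "\<forall>q\<in>S. 0 < \<sigma> * snd q" and y: "\<forall>q\<in>S. snd q \<noteq> 0 \<and> \<bar>snd q\<bar> \<le> 1"
    using pos by auto
  have dP: "differentiable_upto k ?P S" by (rule differentiable_upto_snd_powr[OF S pos'])
  have df: "differentiable_upto k ?f S"
    using differentiable_upto_const_add[OF S differentiable_upto_mono[OF \<phi>]] by simp
  obtain k' where k': "k = Suc k'" using k by (cases k) auto
  have "hderiv S k (\<lambda>q. c0 + ?P q *\<^sub>R ?f q) p hs = hderiv S k (\<lambda>q. ?P q *\<^sub>R ?f q) p hs"
    using hderiv_const_add[OF S _ p] differentiable_upto_scaleR[OF S dP df] k' by simp
  also have "\<dots> = (\<Sum>z\<leftarrow>splits hs. hderiv S (length (fst z)) ?P p (fst z) *\<^sub>R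
                                   hderiv S (length (snd z)) ?f p (snd z))"
    using hderiv_scaleR_leibniz[OF S dP df, of hs p] hs p by simp
  finally have "nrm (hderiv S k (\<lambda>q. c0 + ?P q *\<^sub>R ?f q) p hs) \<le>
      (\<Sum>z\<leftarrow>splits hs. nrm (hderiv S (length (fst z)) ?P p (fst z) *\<^sub>R hderiv S (length (snd z)) ?f p (snd z)))"
    using is_norm_sum_list[OF nrm] by simp
  also have "\<dots> \<le> (\<Sum>z\<leftarrow>splits hs. ?A * ?E * \<bar>snd p\<bar> powr (\<alpha> - real k) * ?\<Pi> hs)"
  proof (rule sum_list_mono)
    fix z assume z: "z \<in> set (splits hs)"
    let ?a = "length (fst z)" and ?b = "length (snd z)"
    have ab: "?a + ?b = k" using length_splits_mem[OF z] hs by simp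
    have "\<bar>falling_factorial \<alpha> ?a\<bar> \<le> ?A" using ab by (intro member_le_sum) auto
    then have Pb: "\<bar>hderiv S ?a ?P p (fst z)\<bar> \<le> ?A * \<bar>snd p\<bar> powr (\<alpha> - real ?a) * ?\<Pi> (fst z)"
      using abs_hderiv_snd_powr_le[OF S pos' \<sigma> p, of "fst z" \<alpha> N] prod_list_prod_norm_nonneg[OF N]
      by (smt (verit) mult_right_mono powr_ge_zero zero_le_mult_iff)
    have fb: "nrm (hderiv S ?b ?f p (snd z)) \<le> ?E * \<bar>snd p\<bar> powr (- real ?b) * ?\<Pi> (snd z)"
      using ab by (intro hderiv_const_add_bound[OF N nrm S dense y \<phi> bound K \<gamma> p]) auto
    have "nrm (hderiv S ?a ?P p (fst z) *\<^sub>R hderiv S ?b ?f p (snd z)) \<le>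
        (?A * \<bar>snd p\<bar> powr (\<alpha> - real ?a) * ?\<Pi> (fst z)) * (?E * \<bar>snd p\<bar> powr (- real ?b) * ?\<Pi> (snd z))"
      unfolding is_norm_scale[OF nrm] using Pb fb
      by (intro mult_mono) (auto simp: is_norm_nonneg[OF nrm])
    also have "\<dots> = ?A * ?E * (\<bar>snd p\<bar> powr (\<alpha> - real ?a) * \<bar>snd p\<bar> powr (- real ?b)) * (?\<Pi> (fst z) * ?\<Pi> (snd z))"
      by (simp add: algebra_simps)
    also have "\<dots> = ?A * ?E * \<bar>snd p\<bar> powr (\<alpha> - real k) * ?\<Pi> hs"
    proof -
      have "real k = real ?a + real ?b" using ab by simp
      then have "\<bar>snd p\<bar> powr (\<alpha> - real ?a) * \<bar>snd p\<bar> powr (- real ?b) = \<bar>snd p\<bar> powr (\<alpha> - real k)"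
        by (simp add: powr_add[symmetric] diff_diff_eq)
      then show ?thesis using prod_list_splits_mem[OF z, of "prod_norm N"] by simp
    qed
    finally show "nrm (hderiv S ?a ?P p (fst z) *\<^sub>R hderiv S ?b ?f p (snd z)) \<le>
        ?A * ?E * \<bar>snd p\<bar> powr (\<alpha> - real k) * ?\<Pi> hs" .
  qed
  also have "\<dots> = 2 ^ k * ?A * ?E * \<bar>snd p\<bar> powr (\<alpha> - real k) * ?\<Pi> hs"
    using hs by (simp add: sum_list_triv length_splits)
  finally show ?thesis .
qed

lemma differentiable_upto_power_factor:
  fixes f :: "'a::real_normed_vector \<times> real \<Rightarrow> 'w::real_normed_vector"
  assumes S: "cone_condition S" and pos: "\<forall>q\<in>S. 0 < \<sigma> * snd q" and f: "differentiable_upto n f S"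
  shows "differentiable_upto n (\<lambda>q. c0 + (\<sigma> * snd q) powr \<alpha> *\<^sub>R (c + f q)) S"
  by (intro differentiable_upto_const_add[OF S] differentiable_upto_scaleR[OF S]
      differentiable_upto_snd_powr[OF S pos] f)

lemma hderiv_bound_one_side:
  fixes N :: "'a::euclidean_space \<Rightarrow> real"
    and F :: "'a \<times> real \<Rightarrow> 'a" and G :: "'a \<times> real \<Rightarrow> real"
    and \<phi> :: "'a \<times> real \<Rightarrow> 'a" and \<psi> :: "'a \<times> real \<Rightarrow> real"
  assumes N: "is_norm N" and V: "open V" and \<sigma>: "\<bar>\<sigma>\<bar> = 1" and k: "k \<ge> 1"
    and K: "K \<ge> 0" and \<gamma>: "\<gamma> \<ge> 0"
  defines "S \<equiv> V \<inter> DDstar N \<inter> {p. 0 < \<sigma> * snd p}"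
  assumes \<phi>: "differentiable_upto (k + 1) \<phi> S" and \<psi>: "differentiable_upto (k + 1) \<psi> S"
    and b\<phi>: "mixed_derivative_bound N N S (k + 1) K \<gamma> \<phi>"
    and b\<psi>: "mixed_derivative_bound abs N S (k + 1) K \<gamma> \<psi>"
    and F: "\<forall>q\<in>S. F q = x0 + \<bar>snd q\<bar> powr \<alpha> *\<^sub>R (B + \<phi> q)"
    and G: "\<forall>q\<in>S. G q = y0 + \<bar>snd q\<bar> powr \<alpha> * (A + \<psi> q)"
  shows "\<exists>c>0. \<forall>p\<in>S. \<forall>hs. length hs = k \<longrightarrow>
     prod_norm N (hderiv (DDstar N) k (\<lambda>p. (F p, G p)) p hs)
       \<le> c * \<bar>snd p\<bar> powr (\<alpha> - real k) * (\<Prod>e\<leftarrow>hs. prod_norm N e)"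
proof -
  have S: "cone_condition S" and dense: "S \<subseteq> closure (interior S)"
    unfolding S_def using half_region_regular[OF N V \<sigma>] by auto
  have pos: "\<forall>q\<in>S. 0 < \<sigma> * snd q \<and> \<bar>snd q\<bar> \<le> 1"
    by (auto simp: S_def DDstar_def DD_def)
  have abs_snd: "\<sigma> * snd q = \<bar>snd q\<bar>" if "q \<in> S" for q
    using pos that \<sigma> by (auto simp: abs_if split: if_splits)
  let ?TF = "\<lambda>q. x0 + (\<sigma> * snd q) powr \<alpha> *\<^sub>R (B + \<phi> q)"
  let ?TG = "\<lambda>q. y0 + (\<sigma> * snd q) powr \<alpha> *\<^sub>R (A + \<psi> q)"
  define cF where "cF = 2 ^ k * (\<Sum>j\<le>k. \<bar>falling_factorial \<alpha> j\<bar>) * (N B + 2 ^ k * K)"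
  define cG where "cG = 2 ^ k * (\<Sum>j\<le>k. \<bar>falling_factorial \<alpha> j\<bar>) * (\<bar>A\<bar> + 2 ^ k * K)"
  have c: "cF \<ge> 0" "cG \<ge> 0"
    using K is_norm_nonneg[OF N] by (auto simp: cF_def cG_def intro!: mult_nonneg_nonneg sum_nonneg)
  have "prod_norm N (hderiv (DDstar N) k (\<lambda>p. (F p, G p)) p hs)
       \<le> (cF + cG + 1) * \<bar>snd p\<bar> powr (\<alpha> - real k) * (\<Prod>e\<leftarrow>hs. prod_norm N e)"
    if p: "p \<in> S" and hs: "length hs = k" for p hs
  proof -
    let ?W = "V \<inter> {p. 0 < \<sigma> * snd p}"
    have W: "open ?W" using V by (intro open_Int open_Collect_less continuous_intros) auto
    have SW: "DDstar N \<inter> ?W = S \<inter> ?W" and pW: "p \<in> DDstar N \<inter> ?W"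
      using p by (auto simp: S_def)
    have "\<forall>q\<in>DDstar N \<inter> ?W. (F q, G q) = (?TF q, ?TG q)"
      using F G abs_snd SW by auto
    from hderiv_localize[OF W SW this pW]
    have "hderiv (DDstar N) k (\<lambda>p. (F p, G p)) p hs = hderiv S k (\<lambda>q. (?TF q, ?TG q)) p hs" .
    also have "\<dots> = (hderiv S k ?TF p hs, hderiv S k ?TG p hs)"
    proof (rule hderiv_Pair[OF S _ _ hs p])
      have pos': "\<forall>q\<in>S. 0 < \<sigma> * snd q" using pos by blast
      show "differentiable_upto k ?TF S" "differentiable_upto k ?TG S"
        using differentiable_upto_mono[OF \<phi>] differentiable_upto_mono[OF \<psi>]
        by (intro differentiable_upto_power_factor[OF S pos']; simp)+
    qed
    finally have "prod_norm N (hderiv (DDstar N) k (\<lambda>p. (F p, G p)) p hs) =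
        max (N (hderiv S k ?TF p hs)) \<bar>hderiv S k ?TG p hs\<bar>"
      by (simp add: prod_norm_def)
    moreover have "N (hderiv S k ?TF p hs) \<le> cF * \<bar>snd p\<bar> powr (\<alpha> - real k) * (\<Prod>e\<leftarrow>hs. prod_norm N e)"
      unfolding cF_def
      by (rule hderiv_bound_power_factor[OF N N S dense pos \<sigma> k \<phi> b\<phi> K \<gamma> p hs])
    moreover have "\<bar>hderiv S k ?TG p hs\<bar> \<le> cG * \<bar>snd p\<bar> powr (\<alpha> - real k) * (\<Prod>e\<leftarrow>hs. prod_norm N e)"
      unfolding cG_def
      by (rule hderiv_bound_power_factor[OF N is_norm_abs S dense pos \<sigma> k \<psi> b\<psi> K \<gamma> p hs])
    moreover have "0 \<le> \<bar>snd p\<bar> powr (\<alpha> - real k) * (\<Prod>e\<leftarrow>hs. prod_norm N e)"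
      using prod_list_prod_norm_nonneg[OF N] by simp
    ultimately show ?thesis using c
      by (smt (verit, best) mult.assoc mult_right_mono)
  qed
  then show ?thesis using c by (intro exI[of _ "cF + cG + 1"]) auto
qed

lemma hderiv_bound_half_plane:
  fixes N :: "'a::euclidean_space \<Rightarrow> real"
    and F :: "'a \<times> real \<Rightarrow> 'a" and G :: "'a \<times> real \<Rightarrow> real"
    and \<phi> :: "'a \<times> real \<Rightarrow> 'a" and \<psi> :: "'a \<times> real \<Rightarrow> real"
  assumes N: "is_norm N" and V: "open V" and \<sigma>: "\<bar>\<sigma>\<bar> = 1" and k: "k \<ge> 1"
    and K: "K \<ge> 0" and \<gamma>: "\<gamma> \<ge> 0"
    and F: "\<forall>(x, y)\<in>V \<inter> DDstar N. 0 < \<sigma> * y \<longrightarrow> F (x, y) = x0 + \<bar>y\<bar> powr \<alpha> *\<^sub>R (B + \<phi> (x, y))"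
    and G: "\<forall>(x, y)\<in>V \<inter> DDstar N. 0 < \<sigma> * y \<longrightarrow> G (x, y) = y0 + \<bar>y\<bar> powr \<alpha> * (A + \<psi> (x, y))"
    and \<phi>: "Ck_on (k + 1) \<phi> (V \<inter> DDstar N \<inter> {p. 0 < \<sigma> * snd p})"
    and \<psi>: "Ck_on (k + 1) \<psi> (V \<inter> DDstar N \<inter> {p. 0 < \<sigma> * snd p})"
    and b\<phi>: "\<forall>l m hs x y. l + m \<le> k + 1 \<longrightarrow> length hs = l \<longrightarrow> (x, y) \<in> V \<inter> DDstar N \<longrightarrow> 0 < \<sigma> * y \<longrightarrow>
        N (hderiv (V \<inter> DDstar N \<inter> {p. 0 < \<sigma> * snd p}) (l + m) \<phi> (x, y)
             (map (\<lambda>h. (h, 0)) hs @ replicate m (0, 1)))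
          \<le> K * \<bar>y\<bar> powr (\<gamma> - real m) * prod_list (map N hs)"
    and b\<psi>: "\<forall>l m hs x y. l + m \<le> k + 1 \<longrightarrow> length hs = l \<longrightarrow> (x, y) \<in> V \<inter> DDstar N \<longrightarrow> 0 < \<sigma> * y \<longrightarrow>
        \<bar>hderiv (V \<inter> DDstar N \<inter> {p. 0 < \<sigma> * snd p}) (l + m) \<psi> (x, y)
             (map (\<lambda>h. (h, 0)) hs @ replicate m (0, 1))\<bar>
          \<le> K * \<bar>y\<bar> powr (\<gamma> - real m) * prod_list (map N hs)"
  shows "\<exists>c>0. \<forall>a b hs. (a, b) \<in> V \<inter> DDstar N \<longrightarrow> 0 < \<sigma> * b \<longrightarrow> length hs = k \<longrightarrow>
     prod_norm N (hderiv (DDstar N) k (\<lambda>p. (F p, G p)) (a, b) hs)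
       \<le> c * \<bar>b\<bar> powr (\<alpha> - real k) * prod_list (map (prod_norm N) hs)"
proof -
  let ?S = "V \<inter> DDstar N \<inter> {p. 0 < \<sigma> * snd p}"
  have "mixed_derivative_bound N N ?S (k + 1) K \<gamma> \<phi>" "mixed_derivative_bound abs N ?S (k + 1) K \<gamma> \<psi>"
    using b\<phi> b\<psi> unfolding mixed_derivative_bound_def by auto
  moreover have "\<forall>q\<in>?S. F q = x0 + \<bar>snd q\<bar> powr \<alpha> *\<^sub>R (B + \<phi> q)"
    "\<forall>q\<in>?S. G q = y0 + \<bar>snd q\<bar> powr \<alpha> * (A + \<psi> q)"
    using F G by auto
  ultimately obtain c where "c > 0" and c: "\<forall>p\<in>?S. \<forall>hs. length hs = k \<longrightarrow>
     prod_norm N (hderiv (DDstar N) k (\<lambda>p. (F p, G p)) p hs)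
       \<le> c * \<bar>snd p\<bar> powr (\<alpha> - real k) * (\<Prod>e\<leftarrow>hs. prod_norm N e)"
    using hderiv_bound_one_side[OF N V \<sigma> k K \<gamma> Ck_on_imp_differentiable_upto[OF \<phi>]
        Ck_on_imp_differentiable_upto[OF \<psi>]] by blast
  then show ?thesis
  proof (intro exI[of _ c] conjI allI impI)
    fix a b and hs :: "('a \<times> real) list"
    assume "(a, b) \<in> V \<inter> DDstar N" "0 < \<sigma> * b" "length hs = k"
    then show "prod_norm N (hderiv (DDstar N) k (\<lambda>p. (F p, G p)) (a, b) hs)
       \<le> c * \<bar>b\<bar> powr (\<alpha> - real k) * prod_list (map (prod_norm N) hs)"
      using c[rule_format, of "(a, b)" hs] by simp
  qed
qed

theorem mainTheorem5:
  fixes N :: "'a::euclidean_space \<Rightarrow> real"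
    and k :: nat
    and F :: "'a \<times> real \<Rightarrow> 'a" and G :: "'a \<times> real \<Rightarrow> real"
    and V :: "('a \<times> real) set"
    and xp xm Bp Bm :: 'a and yp ym Ap Am \<alpha> K \<gamma> :: real
    and \<phi>p \<phi>m :: "'a \<times> real \<Rightarrow> 'a" and \<psi>p \<psi>m :: "'a \<times> real \<Rightarrow> real"
  assumes N: "is_norm N"
    and k: "k \<ge> 1"
    and maps: "\<forall>p\<in>DDstar N. (F p, G p) \<in> DD N"
    and V: "open V" "DD0 N \<subseteq> V"
    and A: "Ap \<noteq> 0" "Am \<noteq> 0"
    and \<alpha>: "\<alpha> > 0" and K: "K > 0" and \<gamma>: "\<gamma> > real k - 1"
    and Fp: "\<forall>(x, y)\<in>V \<inter> DDstar N. y > 0 \<longrightarrow>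
               F (x, y) = xp + \<bar>y\<bar> powr \<alpha> *\<^sub>R (Bp + \<phi>p (x, y))"
    and Fm: "\<forall>(x, y)\<in>V \<inter> DDstar N. y < 0 \<longrightarrow>
               F (x, y) = xm + \<bar>y\<bar> powr \<alpha> *\<^sub>R (Bm + \<phi>m (x, y))"
    and Gp: "\<forall>(x, y)\<in>V \<inter> DDstar N. y > 0 \<longrightarrow>
               G (x, y) = yp + \<bar>y\<bar> powr \<alpha> * (Ap + \<psi>p (x, y))"
    and Gm: "\<forall>(x, y)\<in>V \<inter> DDstar N. y < 0 \<longrightarrow>
               G (x, y) = ym + \<bar>y\<bar> powr \<alpha> * (Am + \<psi>m (x, y))"
    and smooth_p: "Ck_on (k + 1) \<phi>p (V \<inter> DDstar N \<inter> {p. snd p > 0})"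
                  "Ck_on (k + 1) \<psi>p (V \<inter> DDstar N \<inter> {p. snd p > 0})"
    and smooth_m: "Ck_on (k + 1) \<phi>m (V \<inter> DDstar N \<inter> {p. snd p < 0})"
                  "Ck_on (k + 1) \<psi>m (V \<inter> DDstar N \<inter> {p. snd p < 0})"
    and bound_\<phi>p: "\<forall>l m hs x y. l + m \<le> k + 1 \<longrightarrow> length hs = l \<longrightarrow>
        (x, y) \<in> V \<inter> DDstar N \<longrightarrow> y > 0 \<longrightarrow>
        N (hderiv (V \<inter> DDstar N \<inter> {p. snd p > 0}) (l + m) \<phi>p (x, y)
             (map (\<lambda>h. (h, 0)) hs @ replicate m (0, 1)))
          \<le> K * \<bar>y\<bar> powr (\<gamma> - real m) * prod_list (map N hs)"
    and bound_\<phi>m: "\<forall>l m hs x y. l + m \<le> k + 1 \<longrightarrow> length hs = l \<longrightarrow>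
        (x, y) \<in> V \<inter> DDstar N \<longrightarrow> y < 0 \<longrightarrow>
        N (hderiv (V \<inter> DDstar N \<inter> {p. snd p < 0}) (l + m) \<phi>m (x, y)
             (map (\<lambda>h. (h, 0)) hs @ replicate m (0, 1)))
          \<le> K * \<bar>y\<bar> powr (\<gamma> - real m) * prod_list (map N hs)"
    and bound_\<psi>p: "\<forall>l m hs x y. l + m \<le> k + 1 \<longrightarrow> length hs = l \<longrightarrow>
        (x, y) \<in> V \<inter> DDstar N \<longrightarrow> y > 0 \<longrightarrow>
        \<bar>hderiv (V \<inter> DDstar N \<inter> {p. snd p > 0}) (l + m) \<psi>p (x, y)
             (map (\<lambda>h. (h, 0)) hs @ replicate m (0, 1))\<bar>
          \<le> K * \<bar>y\<bar> powr (\<gamma> - real m) * prod_list (map N hs)"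
    and bound_\<psi>m: "\<forall>l m hs x y. l + m \<le> k + 1 \<longrightarrow> length hs = l \<longrightarrow>
        (x, y) \<in> V \<inter> DDstar N \<longrightarrow> y < 0 \<longrightarrow>
        \<bar>hderiv (V \<inter> DDstar N \<inter> {p. snd p < 0}) (l + m) \<psi>m (x, y)
             (map (\<lambda>h. (h, 0)) hs @ replicate m (0, 1))\<bar>
          \<le> K * \<bar>y\<bar> powr (\<gamma> - real m) * prod_list (map N hs)"
  shows "\<exists>U c. open U \<and> DD0 N \<subseteq> U \<and> c > 0 \<and>
           (\<forall>a b hs. (a, b) \<in> U \<inter> DDstar N \<longrightarrow> length hs = k \<longrightarrow>
              prod_norm N (hderiv (DDstar N) k (\<lambda>p. (F p, G p)) (a, b) hs)
                \<le> c * \<bar>b\<bar> powr (\<alpha> - real k) * prod_list (map (prod_norm N) hs))"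
proof -
  let ?T = "\<lambda>a b hs. prod_norm N (hderiv (DDstar N) k (\<lambda>p. (F p, G p)) (a, b) hs)"
  let ?R = "\<lambda>b hs. \<bar>b\<bar> powr (\<alpha> - real k) * prod_list (map (prod_norm N) hs)"
  have K0: "K \<ge> 0" and \<gamma>0: "\<gamma> \<ge> 0" using K \<gamma> k by simp_all
  obtain c1 where "c1 > 0" and c1: "\<forall>a b hs. (a, b) \<in> V \<inter> DDstar N \<longrightarrow> b > 0 \<longrightarrow> length hs = k \<longrightarrow>
      ?T a b hs \<le> c1 * ?R b hs"
    using hderiv_bound_half_plane[where \<sigma> = 1, unfolded mult_1,
        OF N V(1) _ k K0 \<gamma>0 Fp Gp smooth_p bound_\<phi>p bound_\<psi>p] by (auto simp: mult.assoc)
  obtain c2 where "c2 > 0" and c2: "\<forall>a b hs. (a, b) \<in> V \<inter> DDstar N \<longrightarrow> b < 0 \<longrightarrow> length hs = k \<longrightarrow>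
      ?T a b hs \<le> c2 * ?R b hs"
    using hderiv_bound_half_plane[where \<sigma> = "-1", unfolded mult_minus1 neg_0_less_iff_less,
        OF N V(1) _ k K0 \<gamma>0 Fm Gm smooth_m bound_\<phi>m bound_\<psi>m] by (auto simp: mult.assoc)
  have "?T a b hs \<le> (c1 + c2) * ?R b hs" if "(a, b) \<in> V \<inter> DDstar N" "length hs = k" for a b hs
  proof -
    have "0 \<le> c1 * ?R b hs" "0 \<le> c2 * ?R b hs" "b \<noteq> 0"
      using \<open>c1 > 0\<close> \<open>c2 > 0\<close> prod_list_prod_norm_nonneg[OF N, of hs] that(1)
      by (auto simp: DDstar_def DD0_def DD_def)
    moreover have "?T a b hs \<le> c1 * ?R b hs \<or> ?T a b hs \<le> c2 * ?R b hs"
      using c1[rule_format, OF that(1) _ that(2)] c2[rule_format, OF that(1) _ that(2)] \<open>b \<noteq> 0\<close>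
      by (meson linorder_neqE)
    ultimately show ?thesis by (simp only: distrib_right) linarith
  qed
  then show ?thesis using V \<open>c1 > 0\<close> \<open>c2 > 0\<close>
    by (intro exI[of _ V] exI[of _ "c1 + c2"]) (auto simp: mult.assoc)
qed

end
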